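(* Let $f_1,\dots,f_n:\mathbb{R}^d\to\mathbb{R}$ be convex and differentiable, each with $L$-Lipschitz gradient, with $f=\frac1n\sum_i f_i$ $\lambda$-strongly convex with minimizer $x^*$. Assume the sparsity structure and the asynchronous SVRG model described in the context, with staleness bound $\tau$ and sparsity constant $\Delta$. Suppose the step size $\eta>0$ and epoch size $m$ satisfy $2L^2\Delta\eta^2\tau^2<1$ and $$0<\theta_s:=\frac{\frac{1}{\lambda\eta m}+4L\,\frac{\eta+L\Delta\tau^2\eta^2}{1-2L^2\Delta\eta^2\tau^2}}{1-4L\,\frac{\eta+L\Delta\tau^2\eta^2}{1-2L^2\Delta\eta^2\tau^2}}<1,$$ with positive denominator. If the epoch-end selection probabilities are $p_j=1/m$ for all $j\in[m]$, then for every $k\ge0$, $$\mathbb{E}\big[f(\tilde x^{k+1})-f(x^* )\big]\le\theta_s\,\mathbb{E}\big[f(\tilde x^{k})-f(x^* )\big].$$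
   Context: Sparsity: each $f_i$ depends only on the coordinates of $x$ indexed by a set $e_i\subseteq[d]$. Write $\|x\|_i^2=\sum_{j\in e_i}x_j^2$, and let $\Delta$ be the smallest constant such that $\frac1n\sum_{i=1}^n\|x\|_i^2\le\Delta\|x\|^2$ for all $x\in\mathbb{R}^d$. Asynchronous SVRG model (consistent reads, bounded staleness, synchronization once per epoch): start from $x^0$, $\tilde x^0=x^0$. Epoch $k+1$ consists of global steps $t=km,\dots,km+m-1$, with $x^{km}=\tilde x^k$. At step $t$, an index $i_t$ is drawn uniformly from $[n]$, independently of all previous indices and iterates, and $$x^{t+1}=x^t+\eta u^t,\qquad u^t=-\big[\nabla f_{i_t}(x^{D(t)})-\nabla f_{i_t}(\tilde x^k)+\nabla f(\tilde x^k)\big],$$ where $D(t)$ is an integer (not depending on $i_t$) with $km\le D(t)\le t$ and $t-D(t)\le\tau$, for a fixed nonnegative integer $\tau$; i.e. the gradient is evaluated at a possibly stale earlier iterate, at most $\tau$ steps old and not older than the start of the current epoch. At the end of epoch $k+1$, $\tilde x^{k+1}$ is chosen at random from $\{x^{km},\dots,x^{km+m-1}\}$, selecting $x^{km+j-1}$ with probability $p_j$, and $x^{(k+1)m}:=\tilde x^{k+1}$. Expectations are over all random indices and selections. *)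

theory Defs
  imports "HOL-Analysis.Analysis" "HOL-Probability.Probability"
begin

definition strongly_convex_on :: "'a::real_normed_vector set \<Rightarrow> ('a \<Rightarrow> real) \<Rightarrow> real \<Rightarrow> bool" where
  "strongly_convex_on S g lam \<longleftrightarrow> convex S \<and>
     (\<forall>x\<in>S. \<forall>y\<in>S. \<forall>t::real. 0 \<le> t \<and> t \<le> 1 \<longrightarrow>
        g (t *\<^sub>R x + (1 - t) *\<^sub>R y) \<le> t * g x + (1 - t) * g y - lam / 2 * t * (1 - t) * (norm (x - y))\<^sup>2)"

definition avg_fun :: "(nat \<Rightarrow> 'a \<Rightarrow> real) \<Rightarrow> nat \<Rightarrow> 'a \<Rightarrow> real" where
  "avg_fun f n x = (1 / real n) * (\<Sum>i<n. f i x)"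

definition avg_grad :: "(nat \<Rightarrow> 'a \<Rightarrow> 'a::real_vector) \<Rightarrow> nat \<Rightarrow> 'a \<Rightarrow> 'a" where
  "avg_grad G n x = (1 / real n) *\<^sub>R (\<Sum>i<n. G i x)"

text \<open>Iterates of epoch k+1 (global steps t = k*m, ..., k*m+j), started from the snapshot xt.
  The list has length j+1; element number j is x^{k*m+j}.  I t is the sampled index i_t,
  D t is the (possibly stale) read time D(t).\<close>
primrec epoch_iters ::
  "(nat \<Rightarrow> 'a \<Rightarrow> 'a::real_vector) \<Rightarrow> nat \<Rightarrow> real \<Rightarrow> (nat \<Rightarrow> nat) \<Rightarrow> nat \<Rightarrow> (nat \<Rightarrow> nat)
    \<Rightarrow> nat \<Rightarrow> 'a \<Rightarrow> nat \<Rightarrow> 'a list" where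
  "epoch_iters G n eta D m I k xt 0 = [xt]"
| "epoch_iters G n eta D m I k xt (Suc j) =
     (let xs = epoch_iters G n eta D m I k xt j; t = k * m + j
      in xs @ [xs ! j + eta *\<^sub>R (- (G (I t) (xs ! (D t - k * m)) - G (I t) xt + avg_grad G n xt))])"

text \<open>Snapshots: x~^0 = x0, and x~^{k+1} = x^{k*m + S k} where S k in {0..m-1}
  (S k = j-1 corresponds to choosing x^{km+j-1}).\<close>
primrec snapshot ::
  "(nat \<Rightarrow> 'a \<Rightarrow> 'a::real_vector) \<Rightarrow> nat \<Rightarrow> real \<Rightarrow> (nat \<Rightarrow> nat) \<Rightarrow> nat \<Rightarrow> 'a
    \<Rightarrow> (nat \<Rightarrow> nat) \<times> (nat \<Rightarrow> nat) \<Rightarrow> nat \<Rightarrow> 'a" where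
  "snapshot G n eta D m x0 \<omega> 0 = x0"
| "snapshot G n eta D m x0 \<omega> (Suc k) =
     epoch_iters G n eta D m (fst \<omega>) k (snapshot G n eta D m x0 \<omega> k) (snd \<omega> k) ! (snd \<omega> k)"

text \<open>Probability space of all randomness: independent uniform indices i_t in [n] (first component)
  and independent uniform epoch-end selections in {0..m-1}, i.e. p_j = 1/m (second component).\<close>
definition svrg_space :: "nat \<Rightarrow> nat \<Rightarrow> ((nat \<Rightarrow> nat) \<times> (nat \<Rightarrow> nat)) measure" where
  "svrg_space n m =
     (PiM UNIV (\<lambda>_::nat. measure_pmf (pmf_of_set {..<n}))) \<Otimes>\<^sub>M
     (PiM UNIV (\<lambda>_::nat. measure_pmf (pmf_of_set {..<m})))"

end

theory Submission
  imports Defs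
begin

text \<open>Fix an epoch and average the expansion of the squared distance of the next iterate to
  \<open>x\<^sup>*\<close> over the freshly drawn index: the update direction is an unbiased estimate of the gradient
  of \<open>f\<close> at the stale read point, so convexity and the sparse descent lemma bound the cross term
  by the gap \<open>f(x\<^sup>t) - f(x\<^sup>*)\<close>, up to \<open>L\<Delta>/2\<close> times the squared staleness error.  Cocoercivity
  bounds the second moment of the direction by \<open>8L\<close> times the gaps at the iterate and at the
  snapshot plus \<open>2L\<^sup>2\<Delta>\<close> times the staleness error, while the staleness error is at most \<open>\<tau>\<eta>\<^sup>2\<close>
  times the moments of the last \<open>\<tau>\<close> directions.  Summed over the epoch this loop closes because
  \<open>2L\<^sup>2\<Delta>\<eta>\<^sup>2\<tau>\<^sup>2 < 1\<close>; telescoping, with strong convexity at the snapshot, bounds the sum of the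
  \<open>m\<close> gaps by \<open>m \<theta>\<^sub>s\<close> times the snapshot gap, and the uniform choice of the next snapshot divides
  by \<open>m\<close>.  Every expectation is a finite average, as an epoch reads only finitely many of the
  random indices.\<close>

section \<open>First-order inequalities for differentiable convex functions\<close>

lemma has_real_derivative_along_line:
  fixes f :: "'a::real_inner \<Rightarrow> real"
  assumes grad: "\<And>x. (f has_derivative (\<lambda>h. g x \<bullet> h)) (at x)"
  shows "((\<lambda>s. f (x + s *\<^sub>R h)) has_real_derivative (g (x + s *\<^sub>R h) \<bullet> h)) (at s)"
proof -
  have "((\<lambda>s. x + s *\<^sub>R h) has_derivative (\<lambda>t. t *\<^sub>R h)) (at s)"
    by (auto intro!: derivative_eq_intros)
  from has_derivative_compose[OF this grad]
  have "((\<lambda>s. f (x + s *\<^sub>R h)) has_derivative (\<lambda>t. t * (g (x + s *\<^sub>R h) \<bullet> h))) (at s)"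
    by simp
  moreover have "(\<lambda>t. t * (g (x + s *\<^sub>R h) \<bullet> h)) = (*) (g (x + s *\<^sub>R h) \<bullet> h)"
    by (auto simp: mult.commute)
  ultimately show ?thesis
    unfolding has_field_derivative_def by simp
qed

lemma gradient_inner_eq_if_lines_agree:
  fixes f :: "'a::real_inner \<Rightarrow> real"
  assumes grad: "\<And>x. (f has_derivative (\<lambda>h. g x \<bullet> h)) (at x)"
    and lines: "\<And>s. f (x + s *\<^sub>R h) = f (y + s *\<^sub>R k)"
  shows "g x \<bullet> h = g y \<bullet> k"
proof -
  have "(\<lambda>s. f (x + s *\<^sub>R h)) = (\<lambda>s. f (y + s *\<^sub>R k))"
    using lines by blast
  then have "((\<lambda>s. f (y + s *\<^sub>R k)) has_real_derivative (g x \<bullet> h)) (at 0)"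
    using has_real_derivative_along_line[OF grad, of x h 0] by simp
  moreover have "((\<lambda>s. f (y + s *\<^sub>R k)) has_real_derivative (g y \<bullet> k)) (at 0)"
    using has_real_derivative_along_line[OF grad, of y k 0] by simp
  ultimately show ?thesis
    by (rule DERIV_unique)
qed

lemma convex_on_gradient_inequality:
  fixes f :: "'a::real_inner \<Rightarrow> real"
  assumes convex: "convex_on UNIV f"
    and grad: "\<And>x. (f has_derivative (\<lambda>h. g x \<bullet> h)) (at x)"
  shows "f x + g x \<bullet> (y - x) \<le> f y"
proof -
  define \<phi> where "\<phi> s = f (x + s *\<^sub>R (y - x))" for s
  have "convex_on UNIV \<phi>"
  proof (rule convex_onI)
    fix t a b :: real assume t: "0 < t" "t < 1"
    have "\<phi> ((1 - t) *\<^sub>R a + t *\<^sub>R b)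
        = f ((1 - t) *\<^sub>R (x + a *\<^sub>R (y - x)) + t *\<^sub>R (x + b *\<^sub>R (y - x)))"
      unfolding \<phi>_def by (simp add: algebra_simps)
    also have "\<dots> \<le> (1 - t) * \<phi> a + t * \<phi> b"
      unfolding \<phi>_def using t by (intro convex_onD[OF convex]) auto
    finally show "\<phi> ((1 - t) *\<^sub>R a + t *\<^sub>R b) \<le> (1 - t) * \<phi> a + t * \<phi> b" .
  qed auto
  moreover have "(\<phi> has_real_derivative (g x \<bullet> (y - x))) (at 0 within UNIV)"
    using has_real_derivative_along_line[OF grad, of x "y - x" 0] unfolding \<phi>_def by simp
  ultimately have "\<phi> 1 - \<phi> 0 \<ge> g x \<bullet> (y - x) * (1 - 0)"
    by (intro convex_on_imp_above_tangent) auto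
  then show ?thesis
    by (simp add: \<phi>_def)
qed

lemma descent_along_segment:
  fixes f :: "'a::real_inner \<Rightarrow> real"
  assumes grad: "\<And>x. (f has_derivative (\<lambda>h. g x \<bullet> h)) (at x)"
    and slope: "\<And>s. 0 \<le> s \<Longrightarrow> (g (x + s *\<^sub>R h) - g x) \<bullet> h \<le> L * s * c"
  shows "f (x + h) \<le> f x + g x \<bullet> h + L / 2 * c"
proof -
  define \<psi> where "\<psi> s = f (x + s *\<^sub>R h) - s * (g x \<bullet> h) - L / 2 * s\<^sup>2 * c" for s
  have "(\<psi> has_real_derivative ((g (x + s *\<^sub>R h) - g x) \<bullet> h - L * s * c)) (at s)" for s
    unfolding \<psi>_def
    by (auto intro!: derivative_eq_intros has_real_derivative_along_line[OF grad]
        simp: power2_eq_square inner_diff_left)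
  then have "\<psi> 1 \<le> \<psi> 0"
    using slope by (intro DERIV_nonpos_imp_nonincreasing[of 0 1]) fastforce+
  then show ?thesis
    by (simp add: \<psi>_def)
qed

lemma cocoercive_of_first_order_bounds:
  fixes f :: "'a::real_inner \<Rightarrow> real"
  assumes lower: "\<And>x y. f x + g x \<bullet> (y - x) \<le> f y"
    and upper: "\<And>x y. f y \<le> f x + g x \<bullet> (y - x) + L / 2 * (norm (y - x))\<^sup>2"
    and L: "L > 0"
  shows "(norm (g x - g z))\<^sup>2 / (2 * L) \<le> f x - f z - g z \<bullet> (x - z)"
proof -
  define w where "w = g x - g z"
  \<comment> \<open>Compare the lower bound at \<open>z\<close> and the upper bound at \<open>x\<close> at the point \<open>x - w / L\<close>.\<close>
  define y where "y = x - (1 / L) *\<^sub>R w"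
  have e1: "g x \<bullet> (y - x) = - (1 / L) * (g x \<bullet> w)"
    and e2: "g z \<bullet> (y - z) = g z \<bullet> (x - z) - (1 / L) * (g z \<bullet> w)"
    by (simp_all add: y_def inner_diff_right)
  have e3: "(norm (y - x))\<^sup>2 = (1 / L)\<^sup>2 * (norm w)\<^sup>2"
    by (simp add: y_def power_mult_distrib power2_eq_square)
  have e4: "g x \<bullet> w - g z \<bullet> w = (norm w)\<^sup>2"
    by (simp add: w_def inner_diff_left power2_norm_eq_inner)
  have "f z + g z \<bullet> (y - z) \<le> f x + g x \<bullet> (y - x) + L / 2 * (norm (y - x))\<^sup>2"
    using lower[where x=z and y=y] upper[where x=x and y=y] by linarith
  then have "f z + g z \<bullet> (x - z) - (1 / L) * (g z \<bullet> w)
      \<le> f x - (1 / L) * (g x \<bullet> w) + L / 2 * ((1 / L)\<^sup>2 * (norm w)\<^sup>2)"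
    by (simp add: e1 e2 e3)
  then have "(1 / L) * (g x \<bullet> w - g z \<bullet> w) - L / 2 * ((1 / L)\<^sup>2 * (norm w)\<^sup>2)
      \<le> f x - f z - g z \<bullet> (x - z)"
    by (simp add: algebra_simps)
  moreover have "(1 / L) * (g x \<bullet> w - g z \<bullet> w) - L / 2 * ((1 / L)\<^sup>2 * (norm w)\<^sup>2)
      = (norm w)\<^sup>2 / (2 * L)"
    using L by (simp add: e4 power2_eq_square field_simps)
  ultimately show ?thesis
    by (simp add: w_def)
qed

lemma strongly_convex_on_quadratic_growth:
  fixes F :: "'a::real_normed_vector \<Rightarrow> real"
  assumes strongly: "strongly_convex_on UNIV F lam"
    and minimizer: "\<And>x. F xstar \<le> F x"
  shows "lam / 2 * (norm (x - xstar))\<^sup>2 \<le> F x - F xstar"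
proof (rule ccontr)
  define c where "c = lam / 2 * (norm (x - xstar))\<^sup>2"
  define d where "d = F x - F xstar"
  assume "\<not> c \<le> d"
  then have dc: "d < c" by (simp add: c_def d_def)
  have d0: "d \<ge> 0" using minimizer[of x] by (simp add: d_def)
  \<comment> \<open>Strong convexity on the segment from \<open>xstar\<close> to \<open>x\<close>, evaluated at \<open>t = (c - d) / (2c)\<close>.\<close>
  define t where "t = (c - d) / (2 * c)"
  have c0: "c > 0" using dc d0 by simp
  have t0: "0 < t" and t1: "t \<le> 1" using dc c0 d0 by (auto simp: t_def field_simps)
  have "F xstar \<le> F (t *\<^sub>R x + (1 - t) *\<^sub>R xstar)" by (rule minimizer)
  also have "\<dots> \<le> t * F x + (1 - t) * F xstar - lam / 2 * t * (1 - t) * (norm (x - xstar))\<^sup>2"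
    using strongly t0 t1 unfolding strongly_convex_on_def by auto
  finally have "t * (c * (1 - t)) \<le> t * d" by (simp add: c_def d_def algebra_simps)
  then have "c * (1 - t) \<le> d" using t0 by simp
  moreover have "c * (1 - t) = (c + d) / 2" using c0 by (simp add: t_def field_simps)
  ultimately show False using dc by simp
qed

lemma power2_norm_add_le:
  fixes u v :: "'a::real_normed_vector"
  shows "(norm (u + v))\<^sup>2 \<le> 2 * (norm u)\<^sup>2 + 2 * (norm v)\<^sup>2"
proof -
  have "(norm (u + v))\<^sup>2 \<le> (norm u + norm v)\<^sup>2"
    by (simp add: norm_triangle_ineq power_mono)
  also have "\<dots> \<le> 2 * (norm u)\<^sup>2 + 2 * (norm v)\<^sup>2"
    using sum_squares_ge_zero[of "norm u - norm v" 0] by (simp add: power2_eq_square algebra_simps)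
  finally show ?thesis .
qed

lemma sum_power2_norm_deviation_le:
  fixes u :: "nat \<Rightarrow> 'a::real_inner"
  shows "(\<Sum>i<n. (norm (u i - (1 / real n) *\<^sub>R (\<Sum>j<n. u j)))\<^sup>2) \<le> (\<Sum>i<n. (norm (u i))\<^sup>2)"
proof (cases "n = 0")
  case False
  define b where "b = (1 / real n) *\<^sub>R (\<Sum>j<n. u j)"
  have sum_u: "(\<Sum>j<n. u j) = real n *\<^sub>R b" using False by (simp add: b_def)
  have "(\<Sum>i<n. (norm (u i - b))\<^sup>2) = (\<Sum>i<n. (norm (u i))\<^sup>2 - 2 * (u i \<bullet> b) + (norm b)\<^sup>2)"
    by (intro sum.cong) (auto simp: power2_norm_eq_inner inner_diff_left inner_diff_right inner_commute)
  also have "\<dots> = (\<Sum>i<n. (norm (u i))\<^sup>2) - 2 * ((\<Sum>i<n. u i) \<bullet> b) + real n * (norm b)\<^sup>2"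
    by (simp add: sum.distrib sum_subtractf inner_sum_left sum_distrib_left)
  also have "\<dots> = (\<Sum>i<n. (norm (u i))\<^sup>2) - real n * (norm b)\<^sup>2"
    by (simp add: sum_u power2_norm_eq_inner)
  finally show ?thesis by (simp add: b_def)
qed simp

section \<open>Sparse smooth components\<close>

locale sparse_smooth_sum =
  fixes f :: "nat \<Rightarrow> real ^ 'd \<Rightarrow> real"
    and G :: "nat \<Rightarrow> real ^ 'd \<Rightarrow> real ^ 'd"
    and e :: "nat \<Rightarrow> 'd set"
    and n :: nat and L \<Delta> :: real
  assumes n_pos: "n \<ge> 1"
    and convex: "\<And>i. i < n \<Longrightarrow> convex_on UNIV (f i)"
    and grad: "\<And>i x. i < n \<Longrightarrow> (f i has_derivative (\<lambda>h. G i x \<bullet> h)) (at x)"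
    and lipschitz: "\<And>i x y. i < n \<Longrightarrow> norm (G i x - G i y) \<le> L * norm (x - y)"
    and sparse: "\<And>i x y. i < n \<Longrightarrow> (\<forall>j\<in>e i. x $ j = y $ j) \<Longrightarrow> f i x = f i y"
    and sparsity_bound: "\<And>x. (1 / real n) * (\<Sum>i<n. \<Sum>j\<in>e i. (x $ j)\<^sup>2) \<le> \<Delta> * (norm x)\<^sup>2"
begin

abbreviation F :: "real ^ 'd \<Rightarrow> real" where "F \<equiv> avg_fun f n"
abbreviation gradF :: "real ^ 'd \<Rightarrow> real ^ 'd" where "gradF \<equiv> avg_grad G n"

definition support_proj :: "nat \<Rightarrow> real ^ 'd \<Rightarrow> real ^ 'd" where
  "support_proj i v = (\<chi> j. if j \<in> e i then v $ j else 0)"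

lemma lipschitz_const_nonneg: "L \<ge> 0"
proof -
  obtain k :: 'd where True by blast
  have "0 \<le> L * norm (axis k (1::real) - 0)"
    using lipschitz[of 0 "axis k 1" 0] n_pos by (meson norm_ge_zero order_trans less_le_trans zero_less_one)
  moreover have "0 < norm (axis k (1::real) - 0)" by simp
  ultimately show ?thesis by (simp add: zero_le_mult_iff)
qed

lemma sparsity_const_nonneg: "\<Delta> \<ge> 0"
proof -
  obtain k :: 'd where True by blast
  have "0 \<le> (1 / real n) * (\<Sum>i<n. \<Sum>j\<in>e i. (axis k (1::real) $ j)\<^sup>2)"
    by (intro mult_nonneg_nonneg sum_nonneg) auto
  also have "\<dots> \<le> \<Delta> * (norm (axis k (1::real)))\<^sup>2" by (rule sparsity_bound)
  finally show ?thesis by simp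
qed

lemma gradient_off_support:
  assumes "i < n" "j \<notin> e i"
  shows "G i x $ j = 0"
proof -
  have "G i x \<bullet> axis j 1 = G i x \<bullet> 0"
    using assms by (intro gradient_inner_eq_if_lines_agree[OF grad] sparse) (auto simp: axis_def)
  then show ?thesis by (simp add: inner_axis)
qed

lemma gradient_eq_if_agree_on_support:
  assumes "i < n" "\<forall>j\<in>e i. x $ j = y $ j"
  shows "G i x = G i y"
proof -
  have "G i x \<bullet> h = G i y \<bullet> h" for h
    using assms by (intro gradient_inner_eq_if_lines_agree[OF grad] sparse) auto
  from this[of "G i x - G i y"] have "(G i x - G i y) \<bullet> (G i x - G i y) = 0"
    by (simp add: inner_diff_left)
  then show ?thesis by simp
qed

lemma inner_gradient_support_proj:
  assumes "i < n"
  shows "G i x \<bullet> support_proj i v = G i x \<bullet> v"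
  unfolding inner_vec_def support_proj_def
  by (intro sum.cong) (auto simp: gradient_off_support[OF assms])

lemma power2_norm_support_proj: "(norm (support_proj i v))\<^sup>2 = (\<Sum>j\<in>e i. (v $ j)\<^sup>2)"
proof -
  have "(norm (support_proj i v))\<^sup>2 = (\<Sum>j\<in>UNIV. (if j \<in> e i then (v $ j)\<^sup>2 else 0))"
    unfolding power2_norm_eq_inner inner_vec_def support_proj_def
    by (intro sum.cong) (auto simp: power2_eq_square)
  then show ?thesis
    by (simp add: sum.If_cases)
qed

lemma avg_power2_norm_support_proj_le:
  "(1 / real n) * (\<Sum>i<n. (norm (support_proj i v))\<^sup>2) \<le> \<Delta> * (norm v)\<^sup>2"
  using sparsity_bound[of v] by (simp add: power2_norm_support_proj)

lemma norm_support_proj_le: "norm (support_proj i v) \<le> norm v"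
proof -
  have "(norm (support_proj i v))\<^sup>2 \<le> (norm v)\<^sup>2"
    unfolding power2_norm_eq_inner inner_vec_def support_proj_def
    by (intro sum_mono) auto
  then show ?thesis by (simp add: power_mono_iff)
qed

lemma support_proj_scaleR: "support_proj i (s *\<^sub>R v) = s *\<^sub>R support_proj i v"
  by (auto simp: support_proj_def vec_eq_iff)

lemma gradient_lipschitz_on_support:
  assumes "i < n"
  shows "norm (G i x - G i y) \<le> L * norm (support_proj i (x - y))"
proof -
  define z where "z = (\<chi> j. if j \<in> e i then x $ j else y $ j)"
  have "G i z = G i x"
    using assms by (intro gradient_eq_if_agree_on_support) (auto simp: z_def)
  moreover have "z - y = support_proj i (x - y)"
    by (auto simp: z_def support_proj_def vec_eq_iff)
  ultimately show ?thesis
    using lipschitz[OF assms, of z y] by simp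
qed

lemma component_descent:
  assumes i: "i < n"
  shows "f i y \<le> f i x + G i x \<bullet> (y - x) + L / 2 * (norm (support_proj i (y - x)))\<^sup>2"
proof -
  define h where "h = y - x"
  have "(G i (x + s *\<^sub>R h) - G i x) \<bullet> h \<le> L * s * (norm (support_proj i h))\<^sup>2" if "0 \<le> s" for s
  proof -
    have "(G i (x + s *\<^sub>R h) - G i x) \<bullet> h = (G i (x + s *\<^sub>R h) - G i x) \<bullet> support_proj i h"
      using inner_gradient_support_proj[OF i] by (simp add: inner_diff_left)
    also have "\<dots> \<le> norm (G i (x + s *\<^sub>R h) - G i x) * norm (support_proj i h)"
      by (rule Cauchy_Schwarz_ineq2[THEN order_trans[OF abs_ge_self]])
    also have "\<dots> \<le> L * norm (support_proj i (s *\<^sub>R h)) * norm (support_proj i h)"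
      using gradient_lipschitz_on_support[OF i, of "x + s *\<^sub>R h" x] by (intro mult_right_mono) auto
    also have "\<dots> = L * s * (norm (support_proj i h))\<^sup>2"
      using that by (simp add: support_proj_scaleR power2_eq_square)
    finally show ?thesis .
  qed
  from descent_along_segment[OF grad[OF i] this] show ?thesis
    by (simp add: h_def)
qed

lemma component_gradient_inequality: "i < n \<Longrightarrow> f i x + G i x \<bullet> (y - x) \<le> f i y"
  by (rule convex_on_gradient_inequality[OF convex grad])

lemma component_cocoercive:
  assumes "i < n" "L > 0"
  shows "(norm (G i x - G i z))\<^sup>2 / (2 * L) \<le> f i x - f i z - G i z \<bullet> (x - z)"
proof (rule cocoercive_of_first_order_bounds[OF component_gradient_inequality[OF \<open>i < n\<close>] _ \<open>L > 0\<close>])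
  fix x y
  have "L / 2 * (norm (support_proj i (y - x)))\<^sup>2 \<le> L / 2 * (norm (y - x))\<^sup>2"
    using lipschitz_const_nonneg by (intro mult_left_mono power_mono norm_support_proj_le) auto
  then show "f i y \<le> f i x + G i x \<bullet> (y - x) + L / 2 * (norm (y - x))\<^sup>2"
    using component_descent[OF \<open>i < n\<close>, of y x] by linarith
qed

lemma avg_fun_eq: "F x = (1 / real n) * (\<Sum>i<n. f i x)"
  by (simp add: avg_fun_def)

lemma inner_avg_grad: "gradF x \<bullet> h = (1 / real n) * (\<Sum>i<n. G i x \<bullet> h)"
  by (simp add: avg_grad_def inner_sum_left)

lemma avg_has_derivative: "(F has_derivative (\<lambda>h. gradF x \<bullet> h)) (at x)"
proof -
  have "((\<lambda>x. (1 / real n) * (\<Sum>i<n. f i x)) has_derivative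
      (\<lambda>h. (1 / real n) * (\<Sum>i<n. G i x \<bullet> h))) (at x)"
    by (intro has_derivative_mult_right has_derivative_sum grad) auto
  then show ?thesis
    by (simp add: avg_fun_def[abs_def] inner_avg_grad)
qed

lemma avg_power2_norm_gradient_diff_sparse_le:
  "(1 / real n) * (\<Sum>i<n. (norm (G i y' - G i y))\<^sup>2) \<le> L\<^sup>2 * (\<Delta> * (norm (y' - y))\<^sup>2)"
proof -
  have "(\<Sum>i<n. (norm (G i y' - G i y))\<^sup>2) \<le> (\<Sum>i<n. L\<^sup>2 * (norm (support_proj i (y' - y)))\<^sup>2)"
    using gradient_lipschitz_on_support
    by (intro sum_mono) (metis lessThan_iff norm_ge_zero power_mono power_mult_distrib)
  then have "(1 / real n) * (\<Sum>i<n. (norm (G i y' - G i y))\<^sup>2)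
      \<le> L\<^sup>2 * ((1 / real n) * (\<Sum>i<n. (norm (support_proj i (y' - y)))\<^sup>2))"
    by (simp add: sum_distrib_left[symmetric] divide_right_mono)
  also have "\<dots> \<le> L\<^sup>2 * (\<Delta> * (norm (y' - y))\<^sup>2)"
    by (intro mult_left_mono avg_power2_norm_support_proj_le) auto
  finally show ?thesis .
qed

lemma avg_svrg_direction: "(1 / real n) *\<^sub>R (\<Sum>i<n. G i y - G i X + gradF X) = gradF y"
proof -
  have "(\<Sum>i<n. G i y - G i X + gradF X) = (\<Sum>i<n. G i y) - (\<Sum>i<n. G i X) + real n *\<^sub>R gradF X"
    by (simp only: sum.distrib sum_subtractf sum_constant_scaleR card_lessThan)
  then show ?thesis
    using n_pos by (simp add: avg_grad_def scaleR_add_right scaleR_diff_right)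
qed

lemma avg_descent: "F y \<le> F x + gradF x \<bullet> (y - x) + L * \<Delta> / 2 * (norm (y - x))\<^sup>2"
proof -
  have "F y \<le> (1 / real n)
      * (\<Sum>i<n. f i x + G i x \<bullet> (y - x) + L / 2 * (norm (support_proj i (y - x)))\<^sup>2)"
    unfolding avg_fun_eq by (intro mult_left_mono sum_mono component_descent) auto
  also have "\<dots> = F x + gradF x \<bullet> (y - x)
      + L / 2 * ((1 / real n) * (\<Sum>i<n. (norm (support_proj i (y - x)))\<^sup>2))"
    by (simp add: avg_fun_eq inner_avg_grad sum.distrib sum_distrib_left distrib_left mult.commute)
  also have "\<dots> \<le> F x + gradF x \<bullet> (y - x) + L / 2 * (\<Delta> * (norm (y - x))\<^sup>2)"
    using avg_power2_norm_support_proj_le lipschitz_const_nonneg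
    by (intro add_left_mono mult_left_mono) auto
  finally show ?thesis by simp
qed

lemma avg_gradient_inequality: "F x + gradF x \<bullet> (y - x) \<le> F y"
proof -
  have "(1 / real n) * (\<Sum>i<n. f i x + G i x \<bullet> (y - x)) \<le> F y"
    unfolding avg_fun_eq by (intro mult_left_mono sum_mono component_gradient_inequality) auto
  then show ?thesis
    by (simp add: avg_fun_eq inner_avg_grad sum.distrib distrib_left)
qed

end

locale sparse_strongly_convex_sum = sparse_smooth_sum f G e n L \<Delta>
  for f :: "nat \<Rightarrow> real ^ 'd \<Rightarrow> real" and G e n L \<Delta> +
  fixes lam :: real and xstar :: "real ^ 'd"
  assumes strongly: "strongly_convex_on UNIV (avg_fun f n) lam"
    and lam_pos: "lam > 0"
    and minimizer: "\<And>x. avg_fun f n xstar \<le> avg_fun f n x"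
begin

lemma gradF_minimizer: "gradF xstar = 0"
proof -
  have "(\<lambda>h. gradF xstar \<bullet> h) = (\<lambda>h. 0)"
    by (rule differential_zero_maxmin[of xstar UNIV, OF _ _ avg_has_derivative]) (auto intro: minimizer)
  then have "gradF xstar \<bullet> gradF xstar = 0" by metis
  then show ?thesis by simp
qed

lemma quadratic_growth: "lam / 2 * (norm (x - xstar))\<^sup>2 \<le> F x - F xstar"
  by (rule strongly_convex_on_quadratic_growth[OF strongly minimizer])

lemma avg_power2_norm_gradient_diff_le:
  "(1 / real n) * (\<Sum>i<n. (norm (G i x - G i xstar))\<^sup>2) \<le> 2 * L * (F x - F xstar)"
proof (cases "L = 0")
  case True
  then have "G i x = G i xstar" if "i < n" for i
    using lipschitz[OF that, of x xstar] by simp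
  then show ?thesis
    using True minimizer[of x] by simp
next
  case False
  then have L: "L > 0" using lipschitz_const_nonneg by simp
  have "(\<Sum>i<n. (norm (G i x - G i xstar))\<^sup>2 / (2 * L))
      \<le> (\<Sum>i<n. f i x - f i xstar - G i xstar \<bullet> (x - xstar))"
    by (intro sum_mono component_cocoercive L) auto
  also have "\<dots> = real n * (F x - F xstar) - real n * (gradF xstar \<bullet> (x - xstar))"
    using n_pos by (simp add: avg_fun_eq inner_avg_grad sum_subtractf right_diff_distrib)
  finally have "(\<Sum>i<n. (norm (G i x - G i xstar))\<^sup>2) / (2 * L) \<le> real n * (F x - F xstar)"
    by (simp add: gradF_minimizer sum_divide_distrib)
  then show ?thesis
    using L n_pos by (simp add: field_simps)
qed

lemma avg_power2_norm_gradient_deviation_le: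
  "(1 / real n) * (\<Sum>i<n. (norm (G i X - G i xstar - gradF X))\<^sup>2) \<le> 2 * L * (F X - F xstar)"
proof -
  \<comment> \<open>Since \<open>gradF xstar = 0\<close>, \<open>gradF X\<close> is the mean of the vectors \<open>G i X - G i xstar\<close>.\<close>
  have "gradF X = (1 / real n) *\<^sub>R (\<Sum>j<n. G j X - G j xstar)"
    using gradF_minimizer by (simp add: avg_grad_def sum_subtractf scaleR_diff_right)
  then have "(\<Sum>i<n. (norm (G i X - G i xstar - gradF X))\<^sup>2) \<le> (\<Sum>i<n. (norm (G i X - G i xstar))\<^sup>2)"
    using sum_power2_norm_deviation_le[where u="\<lambda>i. G i X - G i xstar" and n=n] by simp
  then have "(1 / real n) * (\<Sum>i<n. (norm (G i X - G i xstar - gradF X))\<^sup>2)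
      \<le> (1 / real n) * (\<Sum>i<n. (norm (G i X - G i xstar))\<^sup>2)"
    by (intro mult_left_mono) auto
  also have "\<dots> \<le> 2 * L * (F X - F xstar)"
    by (rule avg_power2_norm_gradient_diff_le)
  finally show ?thesis .
qed

text \<open>The second moment of the variance-reduced direction built from the snapshot \<open>X\<close>,
  evaluated at a stale copy \<open>y'\<close> of the current iterate \<open>y\<close>.\<close>
lemma avg_power2_norm_svrg_direction_le:
  "(1 / real n) * (\<Sum>i<n. (norm (G i y' - G i X + gradF X))\<^sup>2)
    \<le> 2 * L\<^sup>2 * \<Delta> * (norm (y' - y))\<^sup>2 + 8 * L * (F y - F xstar) + 8 * L * (F X - F xstar)"
proof -
  have split: "(norm (G i y' - G i X + gradF X))\<^sup>2 \<le> 2 * (norm (G i y' - G i y))\<^sup>2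
      + 4 * (norm (G i y - G i xstar))\<^sup>2 + 4 * (norm (G i X - G i xstar - gradF X))\<^sup>2" for i
  proof -
    have "G i y' - G i X + gradF X
        = (G i y' - G i y) + ((G i y - G i xstar) + - (G i X - G i xstar - gradF X))"
      by (simp add: algebra_simps)
    then have "(norm (G i y' - G i X + gradF X))\<^sup>2 \<le> 2 * (norm (G i y' - G i y))\<^sup>2
        + 2 * (norm ((G i y - G i xstar) + - (G i X - G i xstar - gradF X)))\<^sup>2"
      by (metis power2_norm_add_le)
    also have "\<dots> \<le> 2 * (norm (G i y' - G i y))\<^sup>2
        + 2 * (2 * (norm (G i y - G i xstar))\<^sup>2 + 2 * (norm (- (G i X - G i xstar - gradF X)))\<^sup>2)"
      by (intro add_left_mono mult_left_mono power2_norm_add_le) auto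
    finally show ?thesis by (simp add: norm_minus_commute)
  qed
  have "(1 / real n) * (\<Sum>i<n. (norm (G i y' - G i X + gradF X))\<^sup>2)
      \<le> (1 / real n) * (\<Sum>i<n. 2 * (norm (G i y' - G i y))\<^sup>2
        + 4 * (norm (G i y - G i xstar))\<^sup>2 + 4 * (norm (G i X - G i xstar - gradF X))\<^sup>2)"
    by (intro mult_left_mono sum_mono split) auto
  also have "\<dots> = 2 * ((1 / real n) * (\<Sum>i<n. (norm (G i y' - G i y))\<^sup>2))
      + 4 * ((1 / real n) * (\<Sum>i<n. (norm (G i y - G i xstar))\<^sup>2))
      + 4 * ((1 / real n) * (\<Sum>i<n. (norm (G i X - G i xstar - gradF X))\<^sup>2))"
    by (simp add: sum.distrib sum_distrib_left[symmetric] algebra_simps)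
  also have "\<dots> \<le> 2 * (L\<^sup>2 * (\<Delta> * (norm (y' - y))\<^sup>2)) + 4 * (2 * L * (F y - F xstar))
      + 4 * (2 * L * (F X - F xstar))"
    using avg_power2_norm_gradient_diff_sparse_le[of y' y] avg_power2_norm_gradient_diff_le[of y]
      avg_power2_norm_gradient_deviation_le[of X]
    by linarith
  finally show ?thesis
    by (simp add: algebra_simps)
qed

lemma inner_avg_grad_stale_ge:
  "(y - xstar) \<bullet> gradF y' \<ge> F y - F xstar - L * \<Delta> / 2 * (norm (y - y'))\<^sup>2"
  using avg_gradient_inequality[of y' xstar] avg_descent[of y y']
  by (simp add: inner_commute inner_diff_left inner_diff_right)

end

lemma length_epoch_iters: "length (epoch_iters G n eta D m I k xt j) = Suc j"
  by (induction j) (simp_all add: Let_def)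

lemma nth_epoch_iters:
  "i \<le> j \<Longrightarrow> epoch_iters G n eta D m I k xt j ! i = epoch_iters G n eta D m I k xt i ! i"
proof (induction j)
  case (Suc j)
  then show ?case
    by (cases "i \<le> j") (auto simp: Let_def nth_append length_epoch_iters le_Suc_eq)
qed simp

lemma epoch_iters_step:
  assumes "D (k * m + j) - k * m \<le> j"
  shows "epoch_iters G n eta D m I k xt (Suc j) ! Suc j =
    epoch_iters G n eta D m I k xt j ! j + eta *\<^sub>R (- (G (I (k * m + j))
      (epoch_iters G n eta D m I k xt (D (k * m + j) - k * m) ! (D (k * m + j) - k * m))
      - G (I (k * m + j)) xt + avg_grad G n xt))"
  using nth_epoch_iters[OF assms, where G=G and n=n and eta=eta and D=D and m=m and I=I and k=k and xt=xt]
  by (simp add: Let_def nth_append length_epoch_iters)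

lemma epoch_iters_cong:
  "(\<And>s. s < j \<Longrightarrow> I (k * m + s) = I' (k * m + s)) \<Longrightarrow>
    epoch_iters G n eta D m I k xt j = epoch_iters G n eta D m I' k xt j"
  by (induction j) (simp_all add: Let_def)

lemma snapshot_cong_snd:
  "(\<And>j. j < k \<Longrightarrow> snd \<omega> j = snd \<omega>' j) \<Longrightarrow> fst \<omega> = fst \<omega>' \<Longrightarrow>
    snapshot G n eta D m x0 \<omega> k = snapshot G n eta D m x0 \<omega>' k"
  by (induction k) simp_all

lemma snapshot_cong:
  "(\<And>j. j < k \<Longrightarrow> snd \<omega> j = snd \<omega>' j \<and> snd \<omega> j < m) \<Longrightarrow>
   (\<And>t. t < k * m \<Longrightarrow> fst \<omega> t = fst \<omega>' t) \<Longrightarrow>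
    snapshot G n eta D m x0 \<omega> k = snapshot G n eta D m x0 \<omega>' k"
proof (induction k)
  case (Suc k)
  have "snapshot G n eta D m x0 \<omega> k = snapshot G n eta D m x0 \<omega>' k"
  proof (rule Suc.IH)
    fix j assume "j < k"
    then show "snd \<omega> j = snd \<omega>' j \<and> snd \<omega> j < m" using Suc.prems(1)[of j] by simp
  next
    fix t assume "t < k * m"
    then show "fst \<omega> t = fst \<omega>' t" using Suc.prems(2)[of t] by simp
  qed
  moreover have "snd \<omega> k = snd \<omega>' k" "snd \<omega> k < m"
    using Suc.prems(1)[of k] by auto
  moreover have "epoch_iters G n eta D m (fst \<omega>) k xt (snd \<omega> k)
      = epoch_iters G n eta D m (fst \<omega>') k xt (snd \<omega> k)" for xt
    using Suc.prems(2) \<open>snd \<omega> k < m\<close> by (intro epoch_iters_cong) simp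
  ultimately show ?case
    by simp
qed simp

section \<open>The deterministic epoch recursion\<close>

lemma sum_delay_windows_le:
  fixes b :: "nat \<Rightarrow> real" and d :: "nat \<Rightarrow> nat"
  assumes window: "\<And>j. j < m \<Longrightarrow> d j \<le> j \<and> j \<le> d j + \<tau>"
    and nonneg: "\<And>j. b j \<ge> 0"
  shows "(\<Sum>j<m. \<Sum>s\<in>{d j..<j}. b s) \<le> real \<tau> * (\<Sum>s<m. b s)"
proof -
  \<comment> \<open>Each \<open>s\<close> lies in at most \<open>\<tau>\<close> of the windows, namely those with \<open>s < j \<le> s + \<tau>\<close>.\<close>
  have "(\<Sum>j<m. \<Sum>s\<in>{d j..<j}. b s) = (\<Sum>j<m. \<Sum>s<m. (if d j \<le> s \<and> s < j then b s else 0))"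
  proof (rule sum.cong[OF refl])
    fix j assume "j \<in> {..<m}"
    then have "{d j..<j} = {s\<in>{..<m}. d j \<le> s \<and> s < j}" by auto
    then show "(\<Sum>s\<in>{d j..<j}. b s) = (\<Sum>s<m. (if d j \<le> s \<and> s < j then b s else 0))"
      by (simp add: sum.If_cases Int_def)
  qed
  also have "\<dots> = (\<Sum>s<m. b s * real (card {j\<in>{..<m}. d j \<le> s \<and> s < j}))"
    by (subst sum.swap) (simp add: sum.If_cases Int_def mult.commute)
  also have "\<dots> \<le> (\<Sum>s<m. b s * real \<tau>)"
  proof (intro sum_mono mult_left_mono nonneg)
    fix s
    have "{j\<in>{..<m}. d j \<le> s \<and> s < j} \<subseteq> {s<..s + \<tau>}"
      using window by fastforce
    then show "real (card {j\<in>{..<m}. d j \<le> s \<and> s < j}) \<le> real \<tau>"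
      using card_mono[of "{s<..s + \<tau>}"] by fastforce
  qed
  finally show ?thesis by (simp add: sum_distrib_left mult.commute)
qed

definition svrg_delay_factor :: "real \<Rightarrow> real \<Rightarrow> nat \<Rightarrow> real \<Rightarrow> real" where
  "svrg_delay_factor L \<Delta> \<tau> \<eta> =
     (\<eta> + L * \<Delta> * (real \<tau>)\<^sup>2 * \<eta>\<^sup>2) / (1 - 2 * L\<^sup>2 * \<Delta> * \<eta>\<^sup>2 * (real \<tau>)\<^sup>2)"

definition svrg_rate :: "real \<Rightarrow> real \<Rightarrow> nat \<Rightarrow> real \<Rightarrow> real \<Rightarrow> nat \<Rightarrow> real" where
  "svrg_rate L \<Delta> \<tau> lam \<eta> m =
     (1 / (lam * \<eta> * real m) + 4 * L * svrg_delay_factor L \<Delta> \<tau> \<eta>)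
       / (1 - 4 * L * svrg_delay_factor L \<Delta> \<tau> \<eta>)"

lemma sum_staleness_le:
  fixes r g :: "nat \<Rightarrow> real" and d :: "nat \<Rightarrow> nat"
  assumes stale: "\<And>j. j < m \<Longrightarrow> r j \<le> real \<tau> * \<eta>\<^sup>2 * (\<Sum>s\<in>{d j..<j}. g s)"
    and window: "\<And>j. j < m \<Longrightarrow> d j \<le> j \<and> j \<le> d j + \<tau>"
    and nonneg: "\<And>j. g j \<ge> 0"
  shows "(\<Sum>j<m. r j) \<le> (real \<tau>)\<^sup>2 * \<eta>\<^sup>2 * (\<Sum>j<m. g j)"
proof -
  have "(\<Sum>j<m. r j) \<le> (\<Sum>j<m. real \<tau> * \<eta>\<^sup>2 * (\<Sum>s\<in>{d j..<j}. g s))"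
    by (intro sum_mono stale) auto
  also have "\<dots> = real \<tau> * \<eta>\<^sup>2 * (\<Sum>j<m. \<Sum>s\<in>{d j..<j}. g s)"
    by (simp add: sum_distrib_left)
  also have "\<dots> \<le> real \<tau> * \<eta>\<^sup>2 * (real \<tau> * (\<Sum>j<m. g j))"
    by (intro mult_left_mono sum_delay_windows_le window nonneg) auto
  finally show ?thesis
    by (simp add: power2_eq_square mult_ac)
qed

lemma sum_moment_le:
  fixes F r g :: "nat \<Rightarrow> real" and d :: "nat \<Rightarrow> nat"
  assumes \<Delta>: "\<Delta> \<ge> 0"
    and stale: "\<And>j. j < m \<Longrightarrow> r j \<le> real \<tau> * \<eta>\<^sup>2 * (\<Sum>s\<in>{d j..<j}. g s)"
    and window: "\<And>j. j < m \<Longrightarrow> d j \<le> j \<and> j \<le> d j + \<tau>"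
    and moment: "\<And>j. j < m \<Longrightarrow> g j \<le> 2 * L\<^sup>2 * \<Delta> * r j + 8 * L * F j + 8 * L * Fs"
    and g_nonneg: "\<And>j. g j \<ge> 0"
    and stab: "2 * L\<^sup>2 * \<Delta> * \<eta>\<^sup>2 * (real \<tau>)\<^sup>2 < 1"
  shows "(\<Sum>j<m. g j)
    \<le> 8 * L * ((\<Sum>j<m. F j) + real m * Fs) / (1 - 2 * L\<^sup>2 * \<Delta> * \<eta>\<^sup>2 * (real \<tau>)\<^sup>2)"
proof -
  define q where "q = 2 * L\<^sup>2 * \<Delta> * \<eta>\<^sup>2 * (real \<tau>)\<^sup>2"
  have SR: "(\<Sum>j<m. r j) \<le> (real \<tau>)\<^sup>2 * \<eta>\<^sup>2 * (\<Sum>j<m. g j)"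
    by (rule sum_staleness_le[OF stale window g_nonneg])
  have "(\<Sum>j<m. g j) \<le> (\<Sum>j<m. 2 * L\<^sup>2 * \<Delta> * r j + 8 * L * F j + 8 * L * Fs)"
    by (intro sum_mono moment) auto
  also have "\<dots> = 2 * L\<^sup>2 * \<Delta> * (\<Sum>j<m. r j) + 8 * L * (\<Sum>j<m. F j) + 8 * L * real m * Fs"
    by (simp add: sum.distrib sum_distrib_left)
  \<comment> \<open>The staleness error feeds back into the moments; \<open>q < 1\<close> closes the loop.\<close>
  also have "2 * L\<^sup>2 * \<Delta> * (\<Sum>j<m. r j) \<le> q * (\<Sum>j<m. g j)"
    using mult_left_mono[OF SR, of "2 * L\<^sup>2 * \<Delta>"] \<Delta>
    by (simp add: q_def mult_ac)
  finally have "(1 - q) * (\<Sum>j<m. g j) \<le> 8 * L * ((\<Sum>j<m. F j) + real m * Fs)"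
    by (simp add: algebra_simps)
  then show ?thesis
    using stab by (simp add: q_def field_simps)
qed

text \<open>The deterministic core of the epoch analysis: \<open>a j\<close> plays the expected squared distance to
  the minimizer, \<open>F j\<close> the expected gap, \<open>r j\<close> the expected squared staleness error, \<open>g j\<close> the
  second moment of the update direction and \<open>Fs\<close> the gap at the snapshot.\<close>
lemma epoch_recursion_bound:
  fixes a F r g :: "nat \<Rightarrow> real" and d :: "nat \<Rightarrow> nat"
  assumes m: "m \<ge> 1" and eta: "\<eta> > 0" and lam: "lam > 0" and L: "L \<ge> 0" and \<Delta>: "\<Delta> \<ge> 0"
    and step: "\<And>j. j < m \<Longrightarrow> a (Suc j) \<le> a j - 2 * \<eta> * F j + \<eta> * L * \<Delta> * r j + \<eta>\<^sup>2 * g j"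
    and stale: "\<And>j. j < m \<Longrightarrow> r j \<le> real \<tau> * \<eta>\<^sup>2 * (\<Sum>s\<in>{d j..<j}. g s)"
    and window: "\<And>j. j < m \<Longrightarrow> d j \<le> j \<and> j \<le> d j + \<tau>"
    and moment: "\<And>j. j < m \<Longrightarrow> g j \<le> 2 * L\<^sup>2 * \<Delta> * r j + 8 * L * F j + 8 * L * Fs"
    and g_nonneg: "\<And>j. g j \<ge> 0"
    and a0: "a 0 \<le> 2 / lam * Fs" and am: "a m \<ge> 0"
    and stab: "2 * L\<^sup>2 * \<Delta> * \<eta>\<^sup>2 * (real \<tau>)\<^sup>2 < 1"
    and den: "4 * L * svrg_delay_factor L \<Delta> \<tau> \<eta> < 1"
  shows "(\<Sum>j<m. F j) \<le> real m * svrg_rate L \<Delta> \<tau> lam \<eta> m * Fs"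
proof -
  define SF where "SF = (\<Sum>j<m. F j)"
  define SR where "SR = (\<Sum>j<m. r j)"
  define SG where "SG = (\<Sum>j<m. g j)"
  define q where "q = 2 * L\<^sup>2 * \<Delta> * \<eta>\<^sup>2 * (real \<tau>)\<^sup>2"
  define c where "c = svrg_delay_factor L \<Delta> \<tau> \<eta>"
  have SR: "SR \<le> (real \<tau>)\<^sup>2 * \<eta>\<^sup>2 * SG"
    unfolding SR_def SG_def by (rule sum_staleness_le[OF stale window g_nonneg])
  have SG: "SG \<le> 8 * L * (SF + real m * Fs) / (1 - q)"
    unfolding SG_def SF_def q_def by (rule sum_moment_le[OF \<Delta> stale window moment g_nonneg stab])
  have "a m - a 0 = (\<Sum>j<m. a (Suc j) - a j)"
    by (simp add: sum_lessThan_telescope)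
  also have "\<dots> \<le> (\<Sum>j<m. - 2 * \<eta> * F j + \<eta> * L * \<Delta> * r j + \<eta>\<^sup>2 * g j)"
    by (intro sum_mono) (use step in force)
  also have "\<dots> = - 2 * \<eta> * SF + \<eta> * L * \<Delta> * SR + \<eta>\<^sup>2 * SG"
    unfolding SF_def SR_def SG_def sum.distrib sum_distrib_left[symmetric] by simp
  also have "\<dots> \<le> - 2 * \<eta> * SF + \<eta> * (\<eta> + L * \<Delta> * (real \<tau>)\<^sup>2 * \<eta>\<^sup>2) * SG"
    using mult_left_mono[OF SR, of "\<eta> * L * \<Delta>"] eta L \<Delta> by (simp add: algebra_simps power2_eq_square)
  also have "\<dots> \<le> - 2 * \<eta> * SF + \<eta> * (\<eta> + L * \<Delta> * (real \<tau>)\<^sup>2 * \<eta>\<^sup>2) * (8 * L * (SF + real m * Fs) / (1 - q))"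
    using SG eta L \<Delta> by (intro add_left_mono mult_left_mono) auto
  also have "\<dots> = - 2 * \<eta> * SF + 8 * L * \<eta> * c * (SF + real m * Fs)"
    by (simp add: c_def q_def svrg_delay_factor_def)
  finally have "2 * \<eta> * (1 - 4 * L * c) * SF \<le> (2 / lam + 8 * L * \<eta> * c * real m) * Fs"
    using a0 am by (simp add: algebra_simps)
  then have "SF \<le> (2 / lam + 8 * L * \<eta> * c * real m) * Fs / (2 * \<eta> * (1 - 4 * L * c))"
    using den eta by (simp add: c_def field_simps)
  also have "\<dots> = real m * svrg_rate L \<Delta> \<tau> lam \<eta> m * Fs"
    using m eta lam den by (simp add: svrg_rate_def c_def field_simps)
  finally show ?thesis
    by (simp add: SF_def)
qed

section \<open>One epoch as a finite average\<close>

lemma sum_PiE_eval_average: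
  fixes H :: "('i \<Rightarrow> 'b) \<Rightarrow> 'b \<Rightarrow> real"
  assumes fin: "finite S" "\<And>i. i \<in> S \<Longrightarrow> finite (B i)" and t: "t \<in> S" and ne: "B t \<noteq> {}"
    and inv: "\<And>a z v. a \<in> PiE S B \<Longrightarrow> z \<in> B t \<Longrightarrow> H (a(t := z)) v = H a v"
  shows "(\<Sum>a\<in>PiE S B. H a (a t)) = (1 / real (card (B t))) * (\<Sum>v\<in>B t. \<Sum>a\<in>PiE S B. H a v)"
proof -
  let ?A = "PiE S B"
  have finA: "finite ?A" using fin by (intro finite_PiE) auto
  have finB: "finite (B t)" using fin t by auto
  have fibre: "(\<Sum>a\<in>?A. h a) = (\<Sum>w\<in>B t. \<Sum>a\<in>{a\<in>?A. a t = w}. h a)" for h :: "('i \<Rightarrow> 'b) \<Rightarrow> real"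
  proof -
    have "(\<lambda>a. a t) ` ?A \<subseteq> B t" using t by auto
    from sum.group[OF finA finB this, of h] show ?thesis by simp
  qed
  \<comment> \<open>Overwriting coordinate \<open>t\<close> is a bijection between any two fibres, and \<open>H\<close> does not see it.\<close>
  have fibre_eq: "(\<Sum>a\<in>{a\<in>?A. a t = w}. H a u) = (\<Sum>a\<in>{a\<in>?A. a t = v}. H a u)"
    if v: "v \<in> B t" and w: "w \<in> B t" for v w u
  proof -
    have bij: "bij_betw (\<lambda>a. a(t := v)) {a\<in>?A. a t = w} {a\<in>?A. a t = v}"
      by (rule bij_betwI[where g = "\<lambda>a. a(t := w)"]) (use v w t in \<open>auto simp: PiE_iff extensional_def\<close>)
    have "(\<Sum>a\<in>{a\<in>?A. a t = v}. H a u) = (\<Sum>a\<in>{a\<in>?A. a t = w}. H (a(t := v)) u)"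
      using sum.reindex_bij_betw[OF bij, of "\<lambda>a. H a u"] by simp
    also have "\<dots> = (\<Sum>a\<in>{a\<in>?A. a t = w}. H a u)"
      using inv v by (intro sum.cong) auto
    finally show ?thesis by simp
  qed
  have fibre_avg: "(\<Sum>a\<in>{a\<in>?A. a t = v}. H a u) = (1 / real (card (B t))) * (\<Sum>a\<in>?A. H a u)"
    if "v \<in> B t" for v u
  proof -
    have "(\<Sum>a\<in>?A. H a u) = real (card (B t)) * (\<Sum>a\<in>{a\<in>?A. a t = v}. H a u)"
      using fibre[of "\<lambda>a. H a u"] fibre_eq[OF that] by simp
    then show ?thesis using ne finB by (simp add: field_simps card_gt_0_iff)
  qed
  have "(\<Sum>a\<in>?A. H a (a t)) = (\<Sum>v\<in>B t. \<Sum>a\<in>{a\<in>?A. a t = v}. H a (a t))"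
    by (rule fibre)
  also have "\<dots> = (\<Sum>v\<in>B t. \<Sum>a\<in>{a\<in>?A. a t = v}. H a v)"
    by (intro sum.cong) auto
  also have "\<dots> = (\<Sum>v\<in>B t. (1 / real (card (B t))) * (\<Sum>a\<in>?A. H a v))"
    by (intro sum.cong fibre_avg) auto
  finally show ?thesis by (simp add: sum_distrib_left)
qed

text \<open>Quantities that read only the first \<open>N\<close> indices and the first \<open>K\<close> epoch-end selections
  have as expectation their average over these outcomes.\<close>
definition svrg_outcomes :: "nat \<Rightarrow> nat \<Rightarrow> nat \<Rightarrow> nat \<Rightarrow> ((nat \<Rightarrow> nat) \<times> (nat \<Rightarrow> nat)) set" where
  "svrg_outcomes n m N K = PiE {..<N} (\<lambda>_. {..<n}) \<times> PiE {..<K} (\<lambda>_. {..<m})"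

lemma finite_svrg_outcomes: "finite (svrg_outcomes n m N K)"
  unfolding svrg_outcomes_def by (intro finite_cartesian_product finite_PiE) auto

lemma sum_svrg_outcomes_eval_fst:
  assumes "t < N" "n \<ge> 1"
    and inv: "\<And>\<omega> z v. \<omega> \<in> svrg_outcomes n m N K \<Longrightarrow> z < n \<Longrightarrow> H ((fst \<omega>)(t := z), snd \<omega>) v = H \<omega> v"
  shows "(\<Sum>\<omega>\<in>svrg_outcomes n m N K. H \<omega> (fst \<omega> t))
    = (1 / real n) * (\<Sum>v<n. \<Sum>\<omega>\<in>svrg_outcomes n m N K. H \<omega> v)"
proof -
  let ?A = "PiE {..<N} (\<lambda>_. {..<n})" and ?B = "PiE {..<K} (\<lambda>_. {..<m})"
  have "(\<Sum>\<omega>\<in>svrg_outcomes n m N K. H \<omega> (fst \<omega> t)) = (\<Sum>b\<in>?B. \<Sum>a\<in>?A. H (a, b) (a t))"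
    unfolding svrg_outcomes_def sum.cartesian_product' by (subst sum.swap) simp
  also have "\<dots> = (\<Sum>b\<in>?B. (1 / real n) * (\<Sum>v<n. \<Sum>a\<in>?A. H (a, b) v))"
  proof (rule sum.cong[OF refl])
    fix b assume b: "b \<in> ?B"
    have "(\<Sum>a\<in>?A. H (a, b) (a t)) = (1 / real (card {..<n})) * (\<Sum>v\<in>{..<n}. \<Sum>a\<in>?A. H (a, b) v)"
    proof (rule sum_PiE_eval_average[where H = "\<lambda>a v. H (a, b) v"])
      fix a z v assume "a \<in> ?A" "z \<in> {..<n}"
      then show "H (a(t := z), b) v = H (a, b) v"
        using inv[of "(a, b)" z v] b by (simp add: svrg_outcomes_def)
    qed (use assms in \<open>auto simp: lessThan_empty_iff\<close>)
    then show "(\<Sum>a\<in>?A. H (a, b) (a t)) = (1 / real n) * (\<Sum>v<n. \<Sum>a\<in>?A. H (a, b) v)"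
      by simp
  qed
  also have "\<dots> = (1 / real n) * (\<Sum>v<n. \<Sum>\<omega>\<in>svrg_outcomes n m N K. H \<omega> v)"
    unfolding svrg_outcomes_def sum.cartesian_product' sum_distrib_left[symmetric]
    by (simp only: sum.swap[of _ ?B "{..<n}"] sum.swap[of _ ?B ?A])
  finally show ?thesis .
qed

lemma sum_svrg_outcomes_eval_snd:
  assumes "k < K" "m \<ge> 1"
    and inv: "\<And>\<omega> z v. \<omega> \<in> svrg_outcomes n m N K \<Longrightarrow> z < m \<Longrightarrow> H (fst \<omega>, (snd \<omega>)(k := z)) v = H \<omega> v"
  shows "(\<Sum>\<omega>\<in>svrg_outcomes n m N K. H \<omega> (snd \<omega> k))
    = (1 / real m) * (\<Sum>v<m. \<Sum>\<omega>\<in>svrg_outcomes n m N K. H \<omega> v)"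
proof -
  let ?A = "PiE {..<N} (\<lambda>_. {..<n})" and ?B = "PiE {..<K} (\<lambda>_. {..<m})"
  have "(\<Sum>\<omega>\<in>svrg_outcomes n m N K. H \<omega> (snd \<omega> k)) = (\<Sum>a\<in>?A. \<Sum>b\<in>?B. H (a, b) (b k))"
    unfolding svrg_outcomes_def sum.cartesian_product' by simp
  also have "\<dots> = (\<Sum>a\<in>?A. (1 / real m) * (\<Sum>v<m. \<Sum>b\<in>?B. H (a, b) v))"
  proof (rule sum.cong[OF refl])
    fix a assume a: "a \<in> ?A"
    have "(\<Sum>b\<in>?B. H (a, b) (b k)) = (1 / real (card {..<m})) * (\<Sum>v\<in>{..<m}. \<Sum>b\<in>?B. H (a, b) v)"
    proof (rule sum_PiE_eval_average[where H = "\<lambda>b v. H (a, b) v"])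
      fix b z v assume "b \<in> ?B" "z \<in> {..<m}"
      then show "H (a, b(k := z)) v = H (a, b) v"
        using inv[of "(a, b)" z v] a by (simp add: svrg_outcomes_def)
    qed (use assms in \<open>auto simp: lessThan_empty_iff\<close>)
    then show "(\<Sum>b\<in>?B. H (a, b) (b k)) = (1 / real m) * (\<Sum>v<m. \<Sum>b\<in>?B. H (a, b) v)"
      by simp
  qed
  also have "\<dots> = (1 / real m) * (\<Sum>v<m. \<Sum>\<omega>\<in>svrg_outcomes n m N K. H \<omega> v)"
    unfolding svrg_outcomes_def sum.cartesian_product' sum_distrib_left[symmetric]
    by (simp only: sum.swap[of _ ?A "{..<m}"])
  finally show ?thesis .
qed

locale async_svrg = sparse_strongly_convex_sum f G e n L \<Delta> lam xstar
  for f :: "nat \<Rightarrow> real ^ 'd \<Rightarrow> real" and G e n L \<Delta> lam xstar +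
  fixes m \<tau> :: nat and \<eta> :: real and D :: "nat \<Rightarrow> nat" and x0 :: "real ^ 'd"
  assumes m_pos: "m \<ge> 1"
    and delay: "\<And>t. (t div m) * m \<le> D t \<and> D t \<le> t \<and> t - D t \<le> \<tau>"
    and eta_pos: "\<eta> > 0"
begin

abbreviation outcomes :: "nat \<Rightarrow> ((nat \<Rightarrow> nat) \<times> (nat \<Rightarrow> nat)) set" where
  "outcomes k \<equiv> svrg_outcomes n m (Suc k * m) (Suc k)"

definition snap :: "nat \<Rightarrow> (nat \<Rightarrow> nat) \<times> (nat \<Rightarrow> nat) \<Rightarrow> real ^ 'd" where
  "snap k \<omega> = snapshot G n \<eta> D m x0 \<omega> k"

definition iterate :: "nat \<Rightarrow> (nat \<Rightarrow> nat) \<times> (nat \<Rightarrow> nat) \<Rightarrow> nat \<Rightarrow> real ^ 'd" where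
  "iterate k \<omega> j = epoch_iters G n \<eta> D m (fst \<omega>) k (snap k \<omega>) j ! j"

definition read_offset :: "nat \<Rightarrow> nat \<Rightarrow> nat" where
  "read_offset k j = D (k * m + j) - k * m"

definition direction :: "nat \<Rightarrow> (nat \<Rightarrow> nat) \<times> (nat \<Rightarrow> nat) \<Rightarrow> nat \<Rightarrow> real ^ 'd" where
  "direction k \<omega> j = G (fst \<omega> (k * m + j)) (iterate k \<omega> (read_offset k j))
     - G (fst \<omega> (k * m + j)) (snap k \<omega>) + gradF (snap k \<omega>)"

lemma read_offset_le: "read_offset k j \<le> j"
  using delay[of "k * m + j"] unfolding read_offset_def by arith

lemma read_offset_window:
  assumes "j < m" shows "j \<le> read_offset k j + \<tau>"
proof -
  have "k * m \<le> D (k * m + j)" using delay[of "k * m + j"] assms by simp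
  then show ?thesis using delay[of "k * m + j"] unfolding read_offset_def by arith
qed

lemma iterate_0: "iterate k \<omega> 0 = snap k \<omega>"
  by (simp add: iterate_def)

lemma iterate_Suc: "iterate k \<omega> (Suc j) = iterate k \<omega> j - \<eta> *\<^sub>R direction k \<omega> j"
proof -
  have "iterate k \<omega> (Suc j) = iterate k \<omega> j + \<eta> *\<^sub>R (- direction k \<omega> j)"
    unfolding iterate_def direction_def read_offset_def
    by (rule epoch_iters_step) (use read_offset_le[of k j] in \<open>simp add: read_offset_def\<close>)
  then show ?thesis by simp
qed

lemma iterate_diff: "iterate k \<omega> (d + l) - iterate k \<omega> d = - \<eta> *\<^sub>R (\<Sum>s\<in>{d..<d + l}. direction k \<omega> s)"
  by (induction l) (simp_all add: iterate_Suc scaleR_add_right)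

lemma snap_update_fst:
  assumes "\<omega> \<in> outcomes k" "k * m \<le> t"
  shows "snap k ((fst \<omega>)(t := z), snd \<omega>) = snap k \<omega>"
  unfolding snap_def using assms by (intro snapshot_cong) (auto simp: svrg_outcomes_def PiE_iff)

lemma iterate_update_fst:
  assumes "\<omega> \<in> outcomes k" "k * m + j \<le> t"
  shows "iterate k ((fst \<omega>)(t := z), snd \<omega>) j = iterate k \<omega> j"
proof -
  have "epoch_iters G n \<eta> D m ((fst \<omega>)(t := z)) k (snap k \<omega>) j = epoch_iters G n \<eta> D m (fst \<omega>) k (snap k \<omega>) j"
    using assms by (intro epoch_iters_cong) auto
  then show ?thesis
    using assms by (simp add: iterate_def snap_update_fst)
qed

lemma iterate_update_snd: "iterate k (fst \<omega>, (snd \<omega>)(k := z)) j = iterate k \<omega> j"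
  unfolding iterate_def snap_def by (subst snapshot_cong_snd[of k _ \<omega>]) auto

text \<open>The index drawn at step \<open>k m + j\<close> is independent of the state it acts on.\<close>
lemma sum_outcomes_fresh_index:
  assumes "j < m"
  shows "(\<Sum>\<omega>\<in>outcomes k. \<Phi> (iterate k \<omega> j) (iterate k \<omega> (read_offset k j)) (snap k \<omega>) (fst \<omega> (k * m + j)))
    = (\<Sum>\<omega>\<in>outcomes k. (1 / real n) * (\<Sum>i<n. \<Phi> (iterate k \<omega> j) (iterate k \<omega> (read_offset k j)) (snap k \<omega>) i))"
proof -
  have "(\<Sum>\<omega>\<in>outcomes k. \<Phi> (iterate k \<omega> j) (iterate k \<omega> (read_offset k j)) (snap k \<omega>) (fst \<omega> (k * m + j)))
    = (1 / real n) * (\<Sum>i<n. \<Sum>\<omega>\<in>outcomes k. \<Phi> (iterate k \<omega> j) (iterate k \<omega> (read_offset k j)) (snap k \<omega>) i)"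
    using assms n_pos read_offset_le[of k j]
    by (intro sum_svrg_outcomes_eval_fst) (simp_all add: iterate_update_fst snap_update_fst)
  then show ?thesis
    by (simp only: sum_distrib_left) (rule sum.swap)
qed

text \<open>Sums over \<open>outcomes k\<close> are expectations up to the common factor \<open>card (outcomes k)\<close>.\<close>
definition dist_sum :: "nat \<Rightarrow> nat \<Rightarrow> real" where
  "dist_sum k j = (\<Sum>\<omega>\<in>outcomes k. (norm (iterate k \<omega> j - xstar))\<^sup>2)"

definition gap_sum :: "nat \<Rightarrow> nat \<Rightarrow> real" where
  "gap_sum k j = (\<Sum>\<omega>\<in>outcomes k. F (iterate k \<omega> j) - F xstar)"

definition staleness_sum :: "nat \<Rightarrow> nat \<Rightarrow> real" where
  "staleness_sum k j = (\<Sum>\<omega>\<in>outcomes k. (norm (iterate k \<omega> j - iterate k \<omega> (read_offset k j)))\<^sup>2)"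

definition moment_sum :: "nat \<Rightarrow> nat \<Rightarrow> real" where
  "moment_sum k j = (\<Sum>\<omega>\<in>outcomes k. (norm (direction k \<omega> j))\<^sup>2)"

lemma sum_inner_direction_ge:
  assumes "j < m"
  shows "(\<Sum>\<omega>\<in>outcomes k. (iterate k \<omega> j - xstar) \<bullet> direction k \<omega> j)
    \<ge> gap_sum k j - L * \<Delta> / 2 * staleness_sum k j"
proof -
  have avg: "(1 / real n) * (\<Sum>i<n. (y - xstar) \<bullet> (G i y' - G i X + gradF X)) = (y - xstar) \<bullet> gradF y'"
    for y y' X
  proof -
    have "(1 / real n) * (\<Sum>i<n. (y - xstar) \<bullet> (G i y' - G i X + gradF X))
        = (y - xstar) \<bullet> ((1 / real n) *\<^sub>R (\<Sum>i<n. G i y' - G i X + gradF X))"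
      by (simp add: inner_sum_right)
    then show ?thesis by (simp only: avg_svrg_direction)
  qed
  have "(\<Sum>\<omega>\<in>outcomes k. (iterate k \<omega> j - xstar) \<bullet> direction k \<omega> j)
      = (\<Sum>\<omega>\<in>outcomes k. (1 / real n) * (\<Sum>i<n. (iterate k \<omega> j - xstar)
          \<bullet> (G i (iterate k \<omega> (read_offset k j)) - G i (snap k \<omega>) + gradF (snap k \<omega>))))"
    unfolding direction_def
    by (rule sum_outcomes_fresh_index[OF assms, where \<Phi>="\<lambda>y y' X i. (y - xstar) \<bullet> (G i y' - G i X + gradF X)"])
  also have "\<dots> = (\<Sum>\<omega>\<in>outcomes k. (iterate k \<omega> j - xstar) \<bullet> gradF (iterate k \<omega> (read_offset k j)))"
    by (simp only: avg)
  also have "\<dots> \<ge> (\<Sum>\<omega>\<in>outcomes k. F (iterate k \<omega> j) - F xstar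
      - L * \<Delta> / 2 * (norm (iterate k \<omega> j - iterate k \<omega> (read_offset k j)))\<^sup>2)"
    by (intro sum_mono inner_avg_grad_stale_ge)
  finally show ?thesis
    by (simp add: gap_sum_def staleness_sum_def sum_subtractf sum_distrib_left)
qed

lemma dist_sum_Suc_le:
  assumes "j < m"
  shows "dist_sum k (Suc j)
    \<le> dist_sum k j - 2 * \<eta> * gap_sum k j + \<eta> * L * \<Delta> * staleness_sum k j + \<eta>\<^sup>2 * moment_sum k j"
proof -
  have "(norm (y - \<eta> *\<^sub>R g - xstar))\<^sup>2
      = (norm (y - xstar))\<^sup>2 - 2 * \<eta> * ((y - xstar) \<bullet> g) + \<eta>\<^sup>2 * (norm g)\<^sup>2" for y g :: "real ^ 'd"
    unfolding power2_norm_eq_inner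
    by (simp add: inner_diff_left inner_diff_right inner_commute power2_eq_square algebra_simps)
  then have "dist_sum k (Suc j) = dist_sum k j
      - 2 * \<eta> * (\<Sum>\<omega>\<in>outcomes k. (iterate k \<omega> j - xstar) \<bullet> direction k \<omega> j) + \<eta>\<^sup>2 * moment_sum k j"
    by (simp add: dist_sum_def moment_sum_def iterate_Suc sum.distrib sum_subtractf sum_distrib_left)
  also have "\<dots> \<le> dist_sum k j - 2 * \<eta> * (gap_sum k j - L * \<Delta> / 2 * staleness_sum k j) + \<eta>\<^sup>2 * moment_sum k j"
    using sum_inner_direction_ge[OF assms] eta_pos by simp
  finally show ?thesis
    by (simp add: algebra_simps)
qed

lemma moment_sum_le:
  assumes "j < m"
  shows "moment_sum k j \<le> 2 * L\<^sup>2 * \<Delta> * staleness_sum k j + 8 * L * gap_sum k j + 8 * L * gap_sum k 0"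
proof -
  have "moment_sum k j = (\<Sum>\<omega>\<in>outcomes k. (1 / real n)
      * (\<Sum>i<n. (norm (G i (iterate k \<omega> (read_offset k j)) - G i (snap k \<omega>) + gradF (snap k \<omega>)))\<^sup>2))"
    using sum_outcomes_fresh_index[OF assms, where k=k and \<Phi>="\<lambda>y y' X i. (norm (G i y' - G i X + gradF X))\<^sup>2"]
    by (simp add: moment_sum_def direction_def)
  also have "\<dots> \<le> (\<Sum>\<omega>\<in>outcomes k. 2 * L\<^sup>2 * \<Delta> * (norm (iterate k \<omega> j - iterate k \<omega> (read_offset k j)))\<^sup>2
      + 8 * L * (F (iterate k \<omega> j) - F xstar) + 8 * L * (F (snap k \<omega>) - F xstar))"
  proof (rule sum_mono)
    fix \<omega>
    show "(1 / real n) * (\<Sum>i<n. (norm (G i (iterate k \<omega> (read_offset k j)) - G i (snap k \<omega>)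
        + gradF (snap k \<omega>)))\<^sup>2)
      \<le> 2 * L\<^sup>2 * \<Delta> * (norm (iterate k \<omega> j - iterate k \<omega> (read_offset k j)))\<^sup>2
        + 8 * L * (F (iterate k \<omega> j) - F xstar) + 8 * L * (F (snap k \<omega>) - F xstar)"
      using avg_power2_norm_svrg_direction_le[of "iterate k \<omega> (read_offset k j)" "snap k \<omega>" "iterate k \<omega> j"]
      by (simp add: norm_minus_commute)
  qed
  also have "\<dots> = 2 * L\<^sup>2 * \<Delta> * staleness_sum k j + 8 * L * gap_sum k j + 8 * L * gap_sum k 0"
    by (simp add: staleness_sum_def gap_sum_def iterate_0 sum.distrib sum_distrib_left)
  finally show ?thesis .
qed

lemma staleness_sum_le:
  assumes "j < m"
  shows "staleness_sum k j \<le> real \<tau> * \<eta>\<^sup>2 * (\<Sum>s\<in>{read_offset k j..<j}. moment_sum k s)"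
proof -
  define d where "d = read_offset k j"
  have d: "d \<le> j" "j \<le> d + \<tau>"
    using read_offset_le read_offset_window[OF assms] by (auto simp: d_def)
  \<comment> \<open>The stale read misses at most \<open>\<tau>\<close> updates; Cauchy--Schwarz over them.\<close>
  have "(norm (iterate k \<omega> j - iterate k \<omega> d))\<^sup>2 \<le> real \<tau> * \<eta>\<^sup>2 * (\<Sum>s\<in>{d..<j}. (norm (direction k \<omega> s))\<^sup>2)"
    for \<omega>
  proof -
    have "(norm (iterate k \<omega> j - iterate k \<omega> d))\<^sup>2 = \<eta>\<^sup>2 * (norm (\<Sum>s\<in>{d..<j}. direction k \<omega> s))\<^sup>2"
      using iterate_diff[of k \<omega> d "j - d"] d eta_pos by (simp add: power_mult_distrib)
    also have "\<dots> \<le> \<eta>\<^sup>2 * (\<Sum>s\<in>{d..<j}. norm (direction k \<omega> s))\<^sup>2"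
      by (intro mult_left_mono power_mono norm_sum) auto
    also have "\<dots> \<le> \<eta>\<^sup>2 * ((\<Sum>s\<in>{d..<j}. (norm (direction k \<omega> s))\<^sup>2) * real (card {d..<j}))"
      by (intro mult_left_mono sum_squared_le_sum_of_squares) auto
    also have "\<dots> \<le> \<eta>\<^sup>2 * ((\<Sum>s\<in>{d..<j}. (norm (direction k \<omega> s))\<^sup>2) * real \<tau>)"
      using d by (intro mult_left_mono sum_nonneg) auto
    finally show ?thesis by (simp add: mult_ac)
  qed
  then have "staleness_sum k j \<le> (\<Sum>\<omega>\<in>outcomes k. real \<tau> * \<eta>\<^sup>2 * (\<Sum>s\<in>{d..<j}. (norm (direction k \<omega> s))\<^sup>2))"
    unfolding staleness_sum_def d_def by (intro sum_mono)
  also have "\<dots> = real \<tau> * \<eta>\<^sup>2 * (\<Sum>s\<in>{d..<j}. moment_sum k s)"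
    unfolding moment_sum_def sum_distrib_left by (rule sum.swap)
  finally show ?thesis
    by (simp add: d_def)
qed

lemma dist_sum_0_le: "dist_sum k 0 \<le> 2 / lam * gap_sum k 0"
proof -
  have "(norm (snap k \<omega> - xstar))\<^sup>2 \<le> 2 / lam * (F (snap k \<omega>) - F xstar)" for \<omega>
    using quadratic_growth[of "snap k \<omega>"] lam_pos by (simp add: field_simps)
  then show ?thesis
    unfolding dist_sum_def gap_sum_def by (simp add: iterate_0 sum_distrib_left sum_mono)
qed

lemma epoch_gap_contraction:
  assumes stab: "2 * L\<^sup>2 * \<Delta> * \<eta>\<^sup>2 * (real \<tau>)\<^sup>2 < 1"
    and den: "4 * L * svrg_delay_factor L \<Delta> \<tau> \<eta> < 1"
  shows "(\<Sum>\<omega>\<in>outcomes k. F (snap (Suc k) \<omega>) - F xstar)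
    \<le> svrg_rate L \<Delta> \<tau> lam \<eta> m * (\<Sum>\<omega>\<in>outcomes k. F (snap k \<omega>) - F xstar)"
proof -
  have gap_sum_le: "(\<Sum>j<m. gap_sum k j) \<le> real m * svrg_rate L \<Delta> \<tau> lam \<eta> m * gap_sum k 0"
    using read_offset_le read_offset_window
    by (intro epoch_recursion_bound[where d = "read_offset k", OF m_pos eta_pos lam_pos
          lipschitz_const_nonneg sparsity_const_nonneg dist_sum_Suc_le staleness_sum_le _ moment_sum_le
          _ dist_sum_0_le _ stab den])
      (auto simp: moment_sum_def dist_sum_def intro: sum_nonneg)
  \<comment> \<open>The new snapshot is a uniformly chosen iterate of the epoch.\<close>
  have "(\<Sum>\<omega>\<in>outcomes k. F (snap (Suc k) \<omega>) - F xstar)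
      = (\<Sum>\<omega>\<in>outcomes k. F (iterate k \<omega> (snd \<omega> k)) - F xstar)"
    by (simp add: snap_def iterate_def)
  also have "\<dots> = (1 / real m) * (\<Sum>j<m. gap_sum k j)"
    unfolding gap_sum_def
    by (rule sum_svrg_outcomes_eval_snd) (use m_pos in \<open>simp_all add: iterate_update_snd\<close>)
  also have "\<dots> \<le> (1 / real m) * (real m * svrg_rate L \<Delta> \<tau> lam \<eta> m * gap_sum k 0)"
    using gap_sum_le by (intro mult_left_mono) auto
  also have "\<dots> = svrg_rate L \<Delta> \<tau> lam \<eta> m * (\<Sum>\<omega>\<in>outcomes k. F (snap k \<omega>) - F xstar)"
    using m_pos by (simp add: gap_sum_def iterate_0)
  finally show ?thesis .
qed

end

section \<open>The probability space of indices\<close>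

abbreviation uniform_seq :: "nat \<Rightarrow> (nat \<Rightarrow> nat) measure" where
  "uniform_seq c \<equiv> PiM UNIV (\<lambda>_::nat. measure_pmf (pmf_of_set {..<c}))"

lemma space_uniform_seq: "space (uniform_seq c) = UNIV"
  by (auto simp: space_PiM)

lemma prod_emb_uniform_seq:
  "prod_emb UNIV (\<lambda>_::nat. measure_pmf (pmf_of_set {..<c})) J (PiE J A) = {f. \<forall>t\<in>J. f t \<in> A t}"
  by (auto simp: prod_emb_def space_PiM PiE_iff)

lemma sets_uniform_seq_cylinder: "finite J \<Longrightarrow> {f. \<forall>t\<in>J. f t \<in> A t} \<in> sets (uniform_seq c)"
  using sets_PiM_I[of J UNIV A "\<lambda>_::nat. measure_pmf (pmf_of_set {..<c})"]
  by (simp add: prod_emb_uniform_seq)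

lemma emeasure_uniform_seq_cylinder:
  assumes "finite J" "c \<ge> 1"
  shows "emeasure (uniform_seq c) {f. \<forall>t\<in>J. f t \<in> A t}
    = (\<Prod>t\<in>J. ennreal (real (card ({..<c} \<inter> A t)) / real c))"
proof -
  have "emeasure (uniform_seq c) {f. \<forall>t\<in>J. f t \<in> A t}
      = (\<Prod>t\<in>J. emeasure (measure_pmf (pmf_of_set {..<c})) (A t))"
    using emeasure_PiM_emb[of UNIV "\<lambda>_::nat. measure_pmf (pmf_of_set {..<c})" J A] assms
    by (simp add: prod_emb_uniform_seq prob_space_measure_pmf)
  also have "\<dots> = (\<Prod>t\<in>J. ennreal (real (card ({..<c} \<inter> A t)) / real c))"
    using assms by (intro prod.cong refl) (simp add: emeasure_pmf_of_set lessThan_empty_iff)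
  finally show ?thesis .
qed

lemma uniform_seq_point_cylinder_eq: "{f. \<forall>t<N. f t = a t} = {f. \<forall>t\<in>{..<N}. f t \<in> {a t}}"
  by auto

lemma sets_uniform_seq_point_cylinder: "{f. \<forall>t<N. f t = a t} \<in> sets (uniform_seq c)"
  unfolding uniform_seq_point_cylinder_eq by (rule sets_uniform_seq_cylinder) simp

lemma emeasure_uniform_seq_point_cylinder:
  assumes "c \<ge> 1" "\<And>t. t < N \<Longrightarrow> a t < c"
  shows "emeasure (uniform_seq c) {f. \<forall>t<N. f t = a t} = ennreal ((1 / real c) ^ N)"
proof -
  have "emeasure (uniform_seq c) {f. \<forall>t<N. f t = a t}
      = (\<Prod>t\<in>{..<N}. ennreal (real (card ({..<c} \<inter> {a t})) / real c))"
    unfolding uniform_seq_point_cylinder_eq using assms by (intro emeasure_uniform_seq_cylinder) auto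
  also have "\<dots> = (\<Prod>t\<in>{..<N}. ennreal (1 / real c))"
    using assms by (intro prod.cong refl) (simp add: Int_absorb1)
  finally show ?thesis
    by (simp add: ennreal_power)
qed

lemma svrg_space_eq: "svrg_space n m = uniform_seq n \<Otimes>\<^sub>M uniform_seq m"
  by (simp add: svrg_space_def)

lemma space_svrg_space: "space (svrg_space n m) = UNIV"
  by (simp add: svrg_space_eq space_pair_measure space_uniform_seq)

lemma prob_space_svrg_space:
  assumes "n \<ge> 1" "m \<ge> 1"
  shows "prob_space (svrg_space n m)"
proof -
  interpret N: prob_space "uniform_seq n" using assms by (intro prob_space_PiM prob_space_measure_pmf)
  interpret M: prob_space "uniform_seq m" using assms by (intro prob_space_PiM prob_space_measure_pmf)
  interpret pair_prob_space "uniform_seq n" "uniform_seq m" ..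
  show ?thesis unfolding svrg_space_eq by (rule prob_space_axioms)
qed

lemma emeasure_svrg_space_Times:
  assumes "m \<ge> 1" "A \<in> sets (uniform_seq n)" "B \<in> sets (uniform_seq m)"
  shows "emeasure (svrg_space n m) (A \<times> B) = emeasure (uniform_seq n) A * emeasure (uniform_seq m) B"
proof -
  interpret M: prob_space "uniform_seq m" using assms by (intro prob_space_PiM prob_space_measure_pmf)
  show ?thesis unfolding svrg_space_eq by (rule M.emeasure_pair_measure_Times[OF assms(2,3)])
qed

lemma AE_svrg_space_index:
  assumes "n \<ge> 1" "m \<ge> 1"
  shows "AE \<omega> in svrg_space n m. fst \<omega> t < n \<and> snd \<omega> s < m"
proof -
  interpret N: prob_space "uniform_seq n" using assms by (intro prob_space_PiM prob_space_measure_pmf)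
  interpret M: prob_space "uniform_seq m" using assms by (intro prob_space_PiM prob_space_measure_pmf)
  interpret pair_prob_space "uniform_seq n" "uniform_seq m" ..
  have AE_coord: "AE f in uniform_seq c. f i < c" if "c \<ge> 1" for c i
    using that by (intro AE_PiM_component prob_space_measure_pmf) (auto simp: AE_measure_pmf_iff lessThan_empty_iff)
  have [measurable]: "(\<lambda>\<omega>. fst \<omega> t) \<in> uniform_seq n \<Otimes>\<^sub>M uniform_seq m \<rightarrow>\<^sub>M measure_pmf (pmf_of_set {..<n})"
    "(\<lambda>\<omega>. snd \<omega> s) \<in> uniform_seq n \<Otimes>\<^sub>M uniform_seq m \<rightarrow>\<^sub>M measure_pmf (pmf_of_set {..<m})"
    by (auto intro: measurable_compose[OF measurable_fst] measurable_compose[OF measurable_snd])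
  have "AE x in uniform_seq n. AE y in uniform_seq m. x t < n \<and> y s < m"
    using AE_coord[OF assms(1)] by eventually_elim (simp add: AE_coord[OF assms(2)])
  then show ?thesis
    unfolding svrg_space_eq by (intro AE_pair_measure) auto
qed

definition svrg_cylinder :: "nat \<Rightarrow> nat \<Rightarrow> (nat \<Rightarrow> nat) \<times> (nat \<Rightarrow> nat) \<Rightarrow> ((nat \<Rightarrow> nat) \<times> (nat \<Rightarrow> nat)) set" where
  "svrg_cylinder N K v = {f. \<forall>t<N. f t = fst v t} \<times> {g. \<forall>j<K. g j = snd v j}"

lemma sets_svrg_cylinder: "svrg_cylinder N K v \<in> sets (svrg_space n m)"
  unfolding svrg_cylinder_def svrg_space_eq by (intro pair_measureI sets_uniform_seq_point_cylinder)

lemma measure_svrg_cylinder: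
  assumes "n \<ge> 1" "m \<ge> 1" "v \<in> svrg_outcomes n m N K"
  shows "measure (svrg_space n m) (svrg_cylinder N K v) = 1 / real (card (svrg_outcomes n m N K))"
proof -
  have "emeasure (svrg_space n m) (svrg_cylinder N K v) = ennreal ((1 / real n) ^ N) * ennreal ((1 / real m) ^ K)"
    using assms unfolding svrg_cylinder_def
    by (subst emeasure_svrg_space_Times)
      (auto intro!: sets_uniform_seq_point_cylinder simp: emeasure_uniform_seq_point_cylinder svrg_outcomes_def PiE_iff)
  also have "\<dots> = ennreal ((1 / real n) ^ N * (1 / real m) ^ K)"
    by (simp add: ennreal_mult'')
  finally show ?thesis
    unfolding measure_def by (simp add: power_one_over svrg_outcomes_def card_cartesian_product card_PiE)
qed

lemma mem_svrg_cylinder_iff: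
  assumes "v \<in> svrg_outcomes n m N K"
  shows "\<omega> \<in> svrg_cylinder N K v \<longleftrightarrow> v = (restrict (fst \<omega>) {..<N}, restrict (snd \<omega>) {..<K})"
  using assms
  by (auto simp: svrg_cylinder_def svrg_outcomes_def PiE_iff extensional_def fun_eq_iff prod_eq_iff mem_Times_iff)

lemma integral_svrg_space_eq_average:
  fixes h :: "(nat \<Rightarrow> nat) \<times> (nat \<Rightarrow> nat) \<Rightarrow> real"
  assumes "n \<ge> 1" "m \<ge> 1" and meas: "h \<in> borel_measurable (svrg_space n m)"
    and prefix: "\<And>\<omega>. (\<forall>t<N. fst \<omega> t < n) \<Longrightarrow> (\<forall>j<K. snd \<omega> j < m) \<Longrightarrow>
         h \<omega> = h (restrict (fst \<omega>) {..<N}, restrict (snd \<omega>) {..<K})"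
  shows "(\<integral>\<omega>. h \<omega> \<partial>svrg_space n m)
    = (\<Sum>v\<in>svrg_outcomes n m N K. h v) / real (card (svrg_outcomes n m N K))"
proof -
  interpret prob_space "svrg_space n m" using assms(1,2) by (rule prob_space_svrg_space)
  let ?O = "svrg_outcomes n m N K"
  have "AE \<omega> in svrg_space n m. h \<omega> = (\<Sum>v\<in>?O. h v * indicator (svrg_cylinder N K v) \<omega>)"
  proof -
    have "AE \<omega> in svrg_space n m. (\<forall>t\<in>{..<N}. fst \<omega> t < n) \<and> (\<forall>j\<in>{..<K}. snd \<omega> j < m)"
      using assms(1,2) AE_svrg_space_index by (intro AE_conjI AE_finite_allI) auto
    then show ?thesis
    proof (rule AE_mp, intro AE_I2 impI)
      fix \<omega> assume range: "(\<forall>t\<in>{..<N}. fst \<omega> t < n) \<and> (\<forall>j\<in>{..<K}. snd \<omega> j < m)"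
      define r where "r = (restrict (fst \<omega>) {..<N}, restrict (snd \<omega>) {..<K})"
      have "r \<in> ?O" using range by (auto simp: r_def svrg_outcomes_def)
      have "h \<omega> = h r"
        unfolding r_def by (rule prefix) (use range in auto)
      also have "\<dots> = (\<Sum>v\<in>?O. if r = v then h v else 0)"
        using \<open>r \<in> ?O\<close> finite_svrg_outcomes by simp
      also have "\<dots> = (\<Sum>v\<in>?O. h v * indicator (svrg_cylinder N K v) \<omega>)"
      proof (rule sum.cong[OF refl])
        fix v assume "v \<in> ?O"
        then have "\<omega> \<in> svrg_cylinder N K v \<longleftrightarrow> r = v"
          by (auto simp: mem_svrg_cylinder_iff r_def)
        then show "(if r = v then h v else 0) = h v * indicator (svrg_cylinder N K v) \<omega>"
          by (simp add: indicator_def)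
      qed
      finally show "h \<omega> = (\<Sum>v\<in>?O. h v * indicator (svrg_cylinder N K v) \<omega>)" .
    qed
  qed
  then have "(\<integral>\<omega>. h \<omega> \<partial>svrg_space n m) = (\<integral>\<omega>. (\<Sum>v\<in>?O. h v * indicator (svrg_cylinder N K v) \<omega>) \<partial>svrg_space n m)"
    by (intro integral_cong_AE meas)
      (auto intro!: borel_measurable_sum borel_measurable_times borel_measurable_const
        borel_measurable_indicator sets_svrg_cylinder)
  also have "\<dots> = (\<Sum>v\<in>?O. h v * measure (svrg_space n m) (svrg_cylinder N K v))"
    by (subst Bochner_Integration.integral_sum)
      (auto intro!: integrable_real_indicator sets_svrg_cylinder simp: emeasure_finite less_top[symmetric] space_svrg_space)
  also have "\<dots> = (\<Sum>v\<in>?O. h v / real (card ?O))"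
    using assms(1,2) by (intro sum.cong refl) (simp add: measure_svrg_cylinder)
  finally show ?thesis
    by (simp add: sum_divide_distrib)
qed

lemma snapshot_restrict:
  assumes "\<forall>j<K. snd \<omega> j < m" "k \<le> K" "k * m \<le> N"
  shows "snapshot G n eta D m x0 (restrict (fst \<omega>) {..<N}, restrict (snd \<omega>) {..<K}) k
    = snapshot G n eta D m x0 \<omega> k"
  using assms by (intro snapshot_cong) auto

lemma snapshot_Suc_reset_selection:
  "snapshot G n eta D m x0 (fst \<omega>, (snd \<omega>)(k := 0)) (Suc k) = snapshot G n eta D m x0 \<omega> k"
  using snapshot_cong_snd[of k "(fst \<omega>, (snd \<omega>)(k := 0))" \<omega>] by simp

lemma measurable_reset_selection:
  "(\<lambda>\<omega>. (fst \<omega>, (snd \<omega>)(k := 0))) \<in> svrg_space n m \<rightarrow>\<^sub>M svrg_space n m"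
proof -
  have "(\<lambda>\<omega>. ((snd \<omega>)(k := 0)) i) \<in> svrg_space n m \<rightarrow>\<^sub>M measure_pmf (pmf_of_set {..<m})" for i
  proof (cases "i = k")
    case False
    have "(\<lambda>\<omega>. snd \<omega> i) \<in> svrg_space n m \<rightarrow>\<^sub>M measure_pmf (pmf_of_set {..<m})"
      unfolding svrg_space_eq by (rule measurable_compose[OF measurable_snd measurable_component_singleton]) simp
    then show ?thesis using False by simp
  qed simp
  then have "(\<lambda>\<omega>. (snd \<omega>)(k := 0)) \<in> svrg_space n m \<rightarrow>\<^sub>M uniform_seq m"
    by (intro measurable_PiM_single') (auto simp: space_PiM)
  then show ?thesis
    unfolding svrg_space_eq by (intro measurable_Pair measurable_fst)
qed

lemma borel_measurable_snapshot_pred: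
  assumes "(\<lambda>\<omega>. \<phi> (snapshot G n eta D m x0 \<omega> (Suc k))) \<in> borel_measurable (svrg_space n m)"
  shows "(\<lambda>\<omega>. \<phi> (snapshot G n eta D m x0 \<omega> k)) \<in> borel_measurable (svrg_space n m)"
proof -
  have "(\<lambda>\<omega>. \<phi> (snapshot G n eta D m x0 ((\<lambda>\<omega>. (fst \<omega>, (snd \<omega>)(k := 0))) \<omega>) (Suc k)))
      \<in> borel_measurable (svrg_space n m)"
    by (rule measurable_compose[OF measurable_reset_selection assms])
  then show ?thesis
    by (simp only: snapshot_Suc_reset_selection)
qed

context async_svrg
begin

lemma integral_gap_eq_average:
  assumes "k \<le> Suc k'"
    and meas: "(\<lambda>\<omega>. F (snapshot G n \<eta> D m x0 \<omega> k) - F xstar) \<in> borel_measurable (svrg_space n m)"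
  shows "(\<integral>\<omega>. F (snapshot G n \<eta> D m x0 \<omega> k) - F xstar \<partial>svrg_space n m)
    = (\<Sum>\<omega>\<in>outcomes k'. F (snapshot G n \<eta> D m x0 \<omega> k) - F xstar) / real (card (outcomes k'))"
  using n_pos m_pos meas
proof (rule integral_svrg_space_eq_average)
  fix \<omega> :: "(nat \<Rightarrow> nat) \<times> (nat \<Rightarrow> nat)"
  assume "\<forall>j<Suc k'. snd \<omega> j < m"
  then have "snapshot G n \<eta> D m x0 (restrict (fst \<omega>) {..<Suc k' * m}, restrict (snd \<omega>) {..<Suc k'}) k
      = snapshot G n \<eta> D m x0 \<omega> k"
    using assms(1) by (intro snapshot_restrict mult_le_mono1) auto
  then show "F (snapshot G n \<eta> D m x0 \<omega> k) - F xstar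
      = F (snapshot G n \<eta> D m x0 (restrict (fst \<omega>) {..<Suc k' * m}, restrict (snd \<omega>) {..<Suc k'}) k) - F xstar"
    by simp
qed

lemma expected_gap_contraction:
  assumes stab: "2 * L\<^sup>2 * \<Delta> * \<eta>\<^sup>2 * (real \<tau>)\<^sup>2 < 1"
    and den: "4 * L * svrg_delay_factor L \<Delta> \<tau> \<eta> < 1"
    and rate: "svrg_rate L \<Delta> \<tau> lam \<eta> m \<ge> 0"
  shows "(\<integral>\<omega>. F (snapshot G n \<eta> D m x0 \<omega> (Suc k)) - F xstar \<partial>svrg_space n m)
    \<le> svrg_rate L \<Delta> \<tau> lam \<eta> m * (\<integral>\<omega>. F (snapshot G n \<eta> D m x0 \<omega> k) - F xstar \<partial>svrg_space n m)"
proof (cases "(\<lambda>\<omega>. F (snapshot G n \<eta> D m x0 \<omega> (Suc k)) - F xstar) \<in> borel_measurable (svrg_space n m)")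
  case True
  then have meas: "(\<lambda>\<omega>. F (snapshot G n \<eta> D m x0 \<omega> k) - F xstar) \<in> borel_measurable (svrg_space n m)"
    by (rule borel_measurable_snapshot_pred[where \<phi> = "\<lambda>x. F x - F xstar"])
  have "(\<integral>\<omega>. F (snapshot G n \<eta> D m x0 \<omega> (Suc k)) - F xstar \<partial>svrg_space n m)
      = (\<Sum>\<omega>\<in>outcomes k. F (snap (Suc k) \<omega>) - F xstar) / real (card (outcomes k))"
    unfolding snap_def by (rule integral_gap_eq_average[OF _ True]) simp
  also have "\<dots> \<le> svrg_rate L \<Delta> \<tau> lam \<eta> m * (\<Sum>\<omega>\<in>outcomes k. F (snap k \<omega>) - F xstar)
      / real (card (outcomes k))"
    by (intro divide_right_mono epoch_gap_contraction stab den) simp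
  also have "\<dots> = svrg_rate L \<Delta> \<tau> lam \<eta> m * (\<integral>\<omega>. F (snapshot G n \<eta> D m x0 \<omega> k) - F xstar \<partial>svrg_space n m)"
    unfolding snap_def integral_gap_eq_average[OF le_SucI[OF order_refl] meas]
    by simp
  finally show ?thesis .
next
  case False
  \<comment> \<open>A non-measurable integrand has Bochner integral \<open>0\<close>, and the right-hand side is nonnegative.\<close>
  then have "(\<integral>\<omega>. F (snapshot G n \<eta> D m x0 \<omega> (Suc k)) - F xstar \<partial>svrg_space n m) = 0"
    by (intro not_integrable_integral_eq) auto
  moreover have "0 \<le> (\<integral>\<omega>. F (snapshot G n \<eta> D m x0 \<omega> k) - F xstar \<partial>svrg_space n m)"
    by (intro integral_nonneg_AE) (simp add: minimizer)
  ultimately show ?thesis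
    using rate by simp
qed

end

theorem theorem2:
  fixes f :: "nat \<Rightarrow> real ^ 'd \<Rightarrow> real"
    and G :: "nat \<Rightarrow> real ^ 'd \<Rightarrow> real ^ 'd"
    and e :: "nat \<Rightarrow> 'd set"
    and n m \<tau> :: nat
    and L lam \<eta> \<Delta> \<theta>s :: real
    and xstar x0 :: "real ^ 'd"
    and D :: "nat \<Rightarrow> nat"
  assumes n_pos: "n \<ge> 1"
    and m_pos: "m \<ge> 1"
    and convex: "\<And>i. i < n \<Longrightarrow> convex_on UNIV (f i)"
    and grad: "\<And>i x. i < n \<Longrightarrow> (f i has_derivative (\<lambda>h. G i x \<bullet> h)) (at x)"
    and lipschitz: "\<And>i x y. i < n \<Longrightarrow> norm (G i x - G i y) \<le> L * norm (x - y)"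
    and strongly: "strongly_convex_on UNIV (avg_fun f n) lam"
    and lam_pos: "lam > 0"
    and minimizer: "\<And>x. avg_fun f n xstar \<le> avg_fun f n x"
    and sparse: "\<And>i x y. i < n \<Longrightarrow> (\<forall>j\<in>e i. x $ j = y $ j) \<Longrightarrow> f i x = f i y"
    and Delta: "\<Delta> \<in> {c. \<forall>x::real ^ 'd.
                  (1 / real n) * (\<Sum>i<n. \<Sum>j\<in>e i. (x $ j)\<^sup>2) \<le> c * (norm x)\<^sup>2}"
    and Delta_least: "\<And>c. (\<forall>x::real ^ 'd.
                  (1 / real n) * (\<Sum>i<n. \<Sum>j\<in>e i. (x $ j)\<^sup>2) \<le> c * (norm x)\<^sup>2) \<Longrightarrow> \<Delta> \<le> c"
    and delay: "\<And>t. (t div m) * m \<le> D t \<and> D t \<le> t \<and> t - D t \<le> \<tau>"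
    and eta_pos: "\<eta> > 0"
    and stab: "2 * L\<^sup>2 * \<Delta> * \<eta>\<^sup>2 * (real \<tau>)\<^sup>2 < 1"
    and denom_pos: "1 - 4 * L * ((\<eta> + L * \<Delta> * (real \<tau>)\<^sup>2 * \<eta>\<^sup>2) / (1 - 2 * L\<^sup>2 * \<Delta> * \<eta>\<^sup>2 * (real \<tau>)\<^sup>2)) > 0"
    and theta_def: "\<theta>s = (1 / (lam * \<eta> * real m)
                 + 4 * L * ((\<eta> + L * \<Delta> * (real \<tau>)\<^sup>2 * \<eta>\<^sup>2) / (1 - 2 * L\<^sup>2 * \<Delta> * \<eta>\<^sup>2 * (real \<tau>)\<^sup>2)))
               / (1 - 4 * L * ((\<eta> + L * \<Delta> * (real \<tau>)\<^sup>2 * \<eta>\<^sup>2) / (1 - 2 * L\<^sup>2 * \<Delta> * \<eta>\<^sup>2 * (real \<tau>)\<^sup>2)))"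
    and theta_bounds: "0 < \<theta>s" "\<theta>s < 1"
  shows "\<forall>k. (\<integral>\<omega>. avg_fun f n (snapshot G n \<eta> D m x0 \<omega> (Suc k)) - avg_fun f n xstar \<partial>svrg_space n m)
           \<le> \<theta>s * (\<integral>\<omega>. avg_fun f n (snapshot G n \<eta> D m x0 \<omega> k) - avg_fun f n xstar \<partial>svrg_space n m)"
proof -
  interpret async_svrg f G e n L \<Delta> lam xstar m \<tau> \<eta> D x0
    using n_pos convex grad lipschitz sparse Delta strongly lam_pos minimizer m_pos delay eta_pos
    by unfold_locales auto
  have "\<theta>s = svrg_rate L \<Delta> \<tau> lam \<eta> m"
    by (simp add: theta_def svrg_rate_def svrg_delay_factor_def)
  moreover have "4 * L * svrg_delay_factor L \<Delta> \<tau> \<eta> < 1"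
    using denom_pos by (simp add: svrg_delay_factor_def)
  ultimately show ?thesis
    using expected_gap_contraction[OF stab] theta_bounds(1) by simp
qed

end
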